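(* For $\theta\in(0,\pi)$ let $\rho^{Ry}_\theta=|\psi^{Ry}_\theta\rangle\langle\psi^{Ry}_\theta|$ and $\rho^{Rx}_\theta=|\psi^{Rx}_\theta\rangle\langle\psi^{Rx}_\theta|$ with $|\psi^{Ry}_\theta\rangle=\cos\tfrac\theta2|00\rangle+\sin\tfrac\theta2|11\rangle$ and $|\psi^{Rx}_\theta\rangle=\cos\tfrac\theta2|00\rangle-i\sin\tfrac\theta2|11\rangle$. Then for all $\theta\in(0,\pi)$ (with $n=2$): $$C(\rho^{Ry}_\theta)=|\sin\theta|+|\cos\theta|-1,\qquad C(\rho^{Rx}_\theta)=\tfrac12\bigl(|\sin\theta|+|\cos\theta|-1\bigr),$$ $$\Gamma(\rho^{Ry}_\theta)=\Gamma(\rho^{Rx}_\theta)=|\sin\theta|+|\cos\theta|,$$ and hence, whenever $C>0$, $\kappa(\rho^{Ry}_\theta)=1$ and $\kappa(\rho^{Rx}_\theta)=2$.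
   Context: Let $I,X,Y,Z$ be the Pauli matrices. For $(q,p)\in\mathbb{F}_2^2$ define the single-qubit phase-point operator $A_{(q,p)}=\tfrac12\bigl(I+(-1)^pX+(-1)^{q+p}Y+(-1)^qZ\bigr)$. For $n$ qubits and $\alpha=(\alpha_1,\dots,\alpha_n)\in(\mathbb{F}_2^2)^n$ set $A_\alpha=A_{\alpha_1}\otimes\cdots\otimes A_{\alpha_n}$. The discrete Wigner function of an $n$-qubit operator $\rho$ is $W_\rho(\alpha)=2^{-n}\mathrm{Tr}(\rho A_\alpha)$, regarded as a vector in $\mathbb{R}^{4^n}$. $\mathrm{Stab}_n$ denotes the set of pure $n$-qubit stabilizer states, i.e. density operators $|\psi\rangle\langle\psi|$ with $|\psi\rangle$ the unique common $+1$ eigenvector of an abelian subgroup of the $n$-qubit Pauli group of size $2^n$ (not containing $-I$). The free Wigner polytope is $\mathcal{W}_{\mathrm{free}}=\mathrm{conv}\{W_\sigma:\sigma\in\mathrm{Stab}_n\}$, and the Wigner distance is $C(\rho)=\min_{f\in\mathcal{W}_{\mathrm{free}}}\|W_\rho-f\|_1$. The stabilizer extent (for mixed states) is $\Gamma(\rho)=\min\{\sum_i|\alpha_i|:\rho=\sum_i\alpha_i\sigma_i,\ \alpha_i\in\mathbb{R},\ \sigma_i\in\mathrm{Stab}_n\}$ (finite sums). For $C(\rho)>0$ the tightness ratio is $\kappa(\rho)=(\Gamma(\rho)-1)/C(\rho)$. *)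

theory Defs
  imports Complex_Main "Jordan_Normal_Form.Matrix"
begin

section \<open>Qubit operators as complex matrices (computational basis, first qubit most significant)\<close>

definition kron :: "complex mat \<Rightarrow> complex mat \<Rightarrow> complex mat" where
  "kron A B = mat (dim_row A * dim_row B) (dim_col A * dim_col B)
     (\<lambda>(i,j). A $$ (i div dim_row B, j div dim_col B) * B $$ (i mod dim_row B, j mod dim_col B))"

fun tensor_list :: "complex mat list \<Rightarrow> complex mat" where
  "tensor_list [] = 1\<^sub>m 1"
| "tensor_list (A # As) = kron A (tensor_list As)"

text \<open>Single-qubit Paulis: 0 = I, 1 = X, 2 = Y, 3 = Z.\<close>
definition pauli :: "nat \<Rightarrow> complex mat" where
  "pauli k = (if k = 0 then mat_of_rows_list 2 [[1,0],[0,1]]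
     else if k = 1 then mat_of_rows_list 2 [[0,1],[1,0]]
     else if k = 2 then mat_of_rows_list 2 [[0,-\<i>],[\<i>,0]]
     else mat_of_rows_list 2 [[1,0],[0,-1]])"

definition pauli_group :: "nat \<Rightarrow> complex mat set" where
  "pauli_group n = {(\<i> ^ k) \<cdot>\<^sub>m tensor_list (map pauli ps) | k ps.
      k < 4 \<and> length ps = n \<and> set ps \<subseteq> {0..3}}"

definition outer :: "complex vec \<Rightarrow> complex mat" where
  "outer \<psi> = mat (dim_vec \<psi>) (dim_vec \<psi>) (\<lambda>(i,j). \<psi> $ i * cnj (\<psi> $ j))"

definition unit_vec_c :: "nat \<Rightarrow> complex vec \<Rightarrow> bool" where
  "unit_vec_c d \<psi> \<longleftrightarrow> \<psi> \<in> carrier_vec d \<and> (\<Sum>i<d. (cmod (\<psi> $ i))\<^sup>2) = 1"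

text \<open>A finite subset of the Pauli group containing I and closed under products is a subgroup.\<close>
definition Stab :: "nat \<Rightarrow> complex mat set" where
  "Stab n = {outer \<psi> | \<psi>. \<exists>S.
      S \<subseteq> pauli_group n \<and> 1\<^sub>m (2^n) \<in> S \<and> (\<forall>P\<in>S. \<forall>Q\<in>S. P * Q \<in> S)
      \<and> (\<forall>P\<in>S. \<forall>Q\<in>S. P * Q = Q * P) \<and> card S = 2^n \<and> - 1\<^sub>m (2^n) \<notin> S
      \<and> unit_vec_c (2^n) \<psi> \<and> (\<forall>P\<in>S. P *\<^sub>v \<psi> = \<psi>)
      \<and> (\<forall>v\<in>carrier_vec (2^n). (\<forall>P\<in>S. P *\<^sub>v v = v) \<longrightarrow> (\<exists>c. v = c \<cdot>\<^sub>v \<psi>))}"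

definition mtrace :: "complex mat \<Rightarrow> complex" where
  "mtrace A = (\<Sum>i<dim_row A. A $$ (i,i))"

definition sgnb :: "bool \<Rightarrow> complex" where
  "sgnb b = (if b then -1 else 1)"

text \<open>Phase point (q,p) in F_2^2, encoded as a pair of booleans (True = 1).\<close>
definition phase_point1 :: "bool \<times> bool \<Rightarrow> complex mat" where
  "phase_point1 qp = (case qp of (q,p) \<Rightarrow>
     (1/2 :: complex) \<cdot>\<^sub>m (pauli 0 + sgnb p \<cdot>\<^sub>m pauli 1 + (sgnb q * sgnb p) \<cdot>\<^sub>m pauli 2
                         + sgnb q \<cdot>\<^sub>m pauli 3))"

definition phase_point :: "(bool \<times> bool) list \<Rightarrow> complex mat" where
  "phase_point \<alpha> = tensor_list (map phase_point1 \<alpha>)"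

definition phase_space :: "nat \<Rightarrow> (bool \<times> bool) list set" where
  "phase_space n = {\<alpha>. length \<alpha> = n}"

definition wigner :: "nat \<Rightarrow> complex mat \<Rightarrow> (bool \<times> bool) list \<Rightarrow> real" where
  "wigner n \<rho> \<alpha> = Re (mtrace (\<rho> * phase_point \<alpha>)) / 2 ^ n"

definition wigner_free :: "nat \<Rightarrow> ((bool \<times> bool) list \<Rightarrow> real) set" where
  "wigner_free n = {f. \<exists>F c. finite F \<and> F \<subseteq> Stab n \<and> (\<forall>\<sigma>\<in>F. c \<sigma> \<ge> (0::real))
      \<and> sum c F = 1 \<and> f = (\<lambda>\<alpha>. \<Sum>\<sigma>\<in>F. c \<sigma> * wigner n \<sigma> \<alpha>)}"

definition l1_dist :: "nat \<Rightarrow> ((bool \<times> bool) list \<Rightarrow> real) \<Rightarrow> ((bool \<times> bool) list \<Rightarrow> real) \<Rightarrow> real" where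
  "l1_dist n f g = (\<Sum>\<alpha>\<in>phase_space n. \<bar>f \<alpha> - g \<alpha>\<bar>)"

definition wigner_distance :: "nat \<Rightarrow> complex mat \<Rightarrow> real" where
  "wigner_distance n \<rho> = Inf {l1_dist n (wigner n \<rho>) f | f. f \<in> wigner_free n}"

definition stab_extent :: "nat \<Rightarrow> complex mat \<Rightarrow> real" where
  "stab_extent n \<rho> = Inf {\<Sum>\<sigma>\<in>F. \<bar>a \<sigma>\<bar> | F a. finite F \<and> F \<subseteq> Stab n
      \<and> \<rho> \<in> carrier_mat (2^n) (2^n)
      \<and> (\<forall>i<2^n. \<forall>j<2^n. \<rho> $$ (i,j) = (\<Sum>\<sigma>\<in>F. complex_of_real (a \<sigma>) * \<sigma> $$ (i,j)))}"

definition tightness :: "nat \<Rightarrow> complex mat \<Rightarrow> real" where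
  "tightness n \<rho> = (stab_extent n \<rho> - 1) / wigner_distance n \<rho>"

section \<open>The states of the theorem (basis order |00>,|01>,|10>,|11>)\<close>

definition psi_Ry :: "real \<Rightarrow> complex vec" where
  "psi_Ry \<theta> = vec 4 (\<lambda>i. if i = 0 then complex_of_real (cos (\<theta>/2))
                          else if i = 3 then complex_of_real (sin (\<theta>/2)) else 0)"

definition psi_Rx :: "real \<Rightarrow> complex vec" where
  "psi_Rx \<theta> = vec 4 (\<lambda>i. if i = 0 then complex_of_real (cos (\<theta>/2))
                          else if i = 3 then - \<i> * complex_of_real (sin (\<theta>/2)) else 0)"

definition rho_Ry :: "real \<Rightarrow> complex mat" where "rho_Ry \<theta> = outer (psi_Ry \<theta>)"
definition rho_Rx :: "real \<Rightarrow> complex mat" where "rho_Rx \<theta> = outer (psi_Rx \<theta>)"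

end

theory Submission
  imports Defs
begin

(* Both quantities are pinned down by matching primal and dual certificates; write s = sin \<theta>,
   c = cos \<theta> and let \<delta> = \<plusminus>1 be the sign of c.
   Upper bounds: \<rho>_Ry = (1 - s + c)/2 |00><00| + (1 - s - c)/2 |11><11| + s |\<Phi>><\<Phi>| with the Bell state
   \<Phi> = (|00> + |11>)/sqrt 2 is a real stabilizer decomposition of l1-weight s + |c|, and W(\<rho>_Ry) lies at
   l1-distance s + |c| - 1 from |c| W(\<sigma>) + (1 - |c|) W(\<Phi>), where \<sigma> is |00> or |11> according to \<delta>.
   The same works for \<rho>_Rx with the Bell state (|00> - i|11>)/sqrt 2 and mixing weight (1 - s + |c|)/2.
   Lower bounds: in a stabilizer state every Pauli expectation lies in {-1, 0, 1}, and two anticommuting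
   Paulis never both have nonzero expectation.  So XX + \<delta> ZI (resp. XY - \<delta> ZI) has expectation of
   modulus at most 1 on every stabilizer state, which bounds the extent.  Since the two-qubit Wigner
   function is the Fourier transform of the Pauli expectations, the phase-space characters of two such
   anticommuting pairs give a witness bounding the pairing with every stabilizer Wigner function,
   hence the Wigner distance. *)

lemma less_4_cases: "(i::nat) < 4 \<longleftrightarrow> i = 0 \<or> i = 1 \<or> i = 2 \<or> i = 3"
  by auto

lemma all_less_4: "(\<forall>i<4::nat. P i) \<longleftrightarrow> P 0 \<and> P 1 \<and> P 2 \<and> P 3"
  by (auto simp: less_4_cases)

lemma sum_lessThan_2: "(\<Sum>i<2::nat. f i) = f 0 + (f 1 :: 'a::comm_monoid_add)"
  by (simp add: eval_nat_numeral)

lemma sum_lessThan_4: "(\<Sum>i<4::nat. f i) = f 0 + f 1 + f 2 + (f 3 :: 'a::comm_monoid_add)"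
  by (simp add: eval_nat_numeral)

lemma sum_UNIV_bool_pair:
  "(\<Sum>u\<in>UNIV. f u) = f (False, False) + f (False, True) + f (True, False) + (f (True, True) :: 'a::comm_monoid_add)"
  by (simp add: UNIV_bool add.assoc flip: UNIV_Times_UNIV sum.cartesian_product)

lemma sum_swap_nested:
  "(\<Sum>i\<in>A. \<Sum>k\<in>B. \<Sum>a\<in>C. \<Sum>b\<in>D. f i k a b) = (\<Sum>a\<in>C. \<Sum>b\<in>D. \<Sum>i\<in>A. \<Sum>k\<in>B. f i k a b)"
proof -
  have "(\<Sum>i\<in>A. \<Sum>k\<in>B. \<Sum>a\<in>C. \<Sum>b\<in>D. f i k a b) = (\<Sum>i\<in>A. \<Sum>a\<in>C. \<Sum>b\<in>D. \<Sum>k\<in>B. f i k a b)"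
    by (intro sum.cong refl) (subst sum.swap, intro sum.cong refl sum.swap)
  also have "\<dots> = (\<Sum>a\<in>C. \<Sum>b\<in>D. \<Sum>i\<in>A. \<Sum>k\<in>B. f i k a b)"
    by (subst sum.swap, intro sum.cong refl sum.swap)
  finally show ?thesis .
qed

lemma sum_product_swap:
  fixes f :: "'u \<Rightarrow> 'z :: comm_semiring_0"
  shows "(\<Sum>u\<in>A. \<Sum>v\<in>B. f u * g v * (\<Sum>c\<in>C. \<Sum>d\<in>D. h c u * k d v * e c d))
       = (\<Sum>c\<in>C. \<Sum>d\<in>D. (\<Sum>u\<in>A. f u * h c u) * (\<Sum>v\<in>B. g v * k d v) * e c d)"
  unfolding sum_distrib_left sum_distrib_right sum_product
  by (subst sum_swap_nested) (intro sum.cong refl; subst sum.swap; simp only: mult_ac)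

lemma sum_mult_sum_swap:
  fixes m :: "'i \<Rightarrow> 'k \<Rightarrow> 'z :: comm_semiring_0"
  shows "(\<Sum>i\<in>A. \<Sum>k\<in>B. m i k * (\<Sum>a\<in>C. \<Sum>b\<in>D. c a b * p a b i k))
       = (\<Sum>a\<in>C. \<Sum>b\<in>D. c a b * (\<Sum>i\<in>A. \<Sum>k\<in>B. m i k * p a b i k))"
  unfolding sum_distrib_left by (subst sum_swap_nested) (simp only: mult.left_commute)

lemma sum_linear_comb4:
  fixes w :: "'a \<Rightarrow> 'b :: field"
  shows "(\<Sum>\<alpha>\<in>A. (p \<alpha> + d * q \<alpha> - r \<alpha> + d * s \<alpha>) / k * w \<alpha>)
    = ((\<Sum>\<alpha>\<in>A. p \<alpha> * w \<alpha>) + d * (\<Sum>\<alpha>\<in>A. q \<alpha> * w \<alpha>) - (\<Sum>\<alpha>\<in>A. r \<alpha> * w \<alpha>)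
       + d * (\<Sum>\<alpha>\<in>A. s \<alpha> * w \<alpha>)) / k"
proof -
  have "(\<Sum>\<alpha>\<in>A. (p \<alpha> + d * q \<alpha> - r \<alpha> + d * s \<alpha>) / k * w \<alpha>)
      = (\<Sum>\<alpha>\<in>A. (p \<alpha> * w \<alpha> + d * (q \<alpha> * w \<alpha>) - r \<alpha> * w \<alpha> + d * (s \<alpha> * w \<alpha>)) / k)"
    by (intro sum.cong refl) (simp add: distrib_right left_diff_distrib mult.assoc)
  also have "\<dots> = ((\<Sum>\<alpha>\<in>A. p \<alpha> * w \<alpha>) + d * (\<Sum>\<alpha>\<in>A. q \<alpha> * w \<alpha>) - (\<Sum>\<alpha>\<in>A. r \<alpha> * w \<alpha>)
       + d * (\<Sum>\<alpha>\<in>A. s \<alpha> * w \<alpha>)) / k"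
    by (simp only: sum_divide_distrib[symmetric] sum.distrib sum_subtractf sum_distrib_left)
  finally show ?thesis .
qed

lemma sum_abs_scaled:
  "(\<Sum>u\<in>A. \<Sum>v\<in>B. \<bar>k * h u v / d\<bar>) = \<bar>k / d\<bar> * (\<Sum>u\<in>A. \<Sum>v\<in>B. \<bar>h u v\<bar>)" for k d :: real
proof -
  have "\<bar>k * x / d\<bar> = \<bar>k / d\<bar> * \<bar>x\<bar>" for x by (simp add: abs_mult abs_divide)
  then show ?thesis by (simp only: sum_distrib_left)
qed

lemma mat_times_mat: "mat n m f * mat m p g = mat n p (\<lambda>(i,j). \<Sum>k<m. f (i,k) * g (k,j))"
  by (rule eq_matI) (auto simp: scalar_prod_def lessThan_atLeast0)

lemma mult_mat_vec_index:
  "M \<in> carrier_mat n m \<Longrightarrow> v \<in> carrier_vec m \<Longrightarrow> i < n \<Longrightarrow> (M *\<^sub>v v) $ i = (\<Sum>j<m. M $$ (i,j) * v $ j)"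
  by (auto simp: scalar_prod_def lessThan_atLeast0)

lemma mtrace_mult:
  "A \<in> carrier_mat d d \<Longrightarrow> B \<in> carrier_mat d d \<Longrightarrow> mtrace (A * B) = (\<Sum>i<d. \<Sum>k<d. A $$ (i,k) * B $$ (k,i))"
  by (simp add: mtrace_def scalar_prod_def lessThan_atLeast0)

lemma mtrace_mult_mat:
  "A \<in> carrier_mat d d \<Longrightarrow> mtrace (A * mat d d f) = (\<Sum>i<d. \<Sum>k<d. A $$ (i,k) * f (k,i))"
  by (simp add: mtrace_mult)

lemma smult_one_mat: "(1 :: 'a :: monoid_mult) \<cdot>\<^sub>m A = A"
  by (rule eq_matI) auto

lemma smult_minus_one_mat: "(- 1 :: 'a :: ring_1) \<cdot>\<^sub>m A = - A"
  by (rule eq_matI) auto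

lemma smult_smult_mat: "(a :: 'a :: semigroup_mult) \<cdot>\<^sub>m (b \<cdot>\<^sub>m A) = (a * b) \<cdot>\<^sub>m A"
  by (rule eq_matI) (auto simp: mult.assoc)

lemma kron_dim [simp]:
  "dim_row (kron A B) = dim_row A * dim_row B" "dim_col (kron A B) = dim_col A * dim_col B"
  by (simp_all add: kron_def)

lemma kron_mat_2:
  "kron (mat 2 2 f) (mat 2 2 g) = mat 4 4 (\<lambda>(i,j). f (i div 2, j div 2) * g (i mod 2, j mod 2))"
  by (rule eq_matI) (auto simp: kron_def less_mult_imp_div_less)

lemma kron_smult: "kron (x \<cdot>\<^sub>m A) (y \<cdot>\<^sub>m B) = (x * y) \<cdot>\<^sub>m kron A B"
proof (rule eq_matI)
  fix i j assume ij: "i < dim_row ((x * y) \<cdot>\<^sub>m kron A B)" "j < dim_col ((x * y) \<cdot>\<^sub>m kron A B)"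
  then have "i div dim_row B < dim_row A" "j div dim_col B < dim_col A"
    "i mod dim_row B < dim_row B" "j mod dim_col B < dim_col B"
    by (auto simp: less_mult_imp_div_less intro!: mod_less_divisor Nat.gr0I)
  with ij show "kron (x \<cdot>\<^sub>m A) (y \<cdot>\<^sub>m B) $$ (i, j) = ((x * y) \<cdot>\<^sub>m kron A B) $$ (i, j)"
    by (simp add: kron_def)
qed (auto simp: kron_def)

lemma kron_mult_2:
  "kron (mat 2 2 f) (mat 2 2 g) * kron (mat 2 2 f') (mat 2 2 g') =
   kron (mat 2 2 f * mat 2 2 f') (mat 2 2 g * mat 2 2 g')"
  unfolding kron_mat_2 mat_times_mat
  by (rule arg_cong[where f = "mat 4 4"], rule ext) (clarsimp simp: sum_lessThan_4 sum_lessThan_2 algebra_simps)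

lemma kron_one_right: "kron A (1\<^sub>m 1) = A"
  by (rule eq_matI) (auto simp: kron_def)

section \<open>Hermitian matrices, stabilized vectors and expectation values\<close>

definition cinner :: "complex vec \<Rightarrow> complex vec \<Rightarrow> complex" where
  "cinner u v = (\<Sum>i<dim_vec v. cnj (u $ i) * v $ i)"

definition hermitian :: "nat \<Rightarrow> complex mat \<Rightarrow> bool" where
  "hermitian d M \<longleftrightarrow> M \<in> carrier_mat d d \<and> (\<forall>i<d. \<forall>j<d. M $$ (j,i) = cnj (M $$ (i,j)))"

lemma hermitian_carrier: "hermitian d M \<Longrightarrow> M \<in> carrier_mat d d"
  unfolding hermitian_def by blast

lemma hermitian_cnj: "hermitian d M \<Longrightarrow> i < d \<Longrightarrow> j < d \<Longrightarrow> cnj (M $$ (j,i)) = M $$ (i,j)"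
  unfolding hermitian_def by (metis complex_cnj_cnj)

lemma hermitian_smult:
  assumes "hermitian d M" "cnj c = c"
  shows "hermitian d (c \<cdot>\<^sub>m M)"
  using hermitian_carrier[OF assms(1)] hermitian_cnj[OF assms(1)] assms(2) by (auto simp: hermitian_def)

lemma cinner_smult_right: "cinner u (c \<cdot>\<^sub>v v) = c * cinner u v"
  by (simp add: cinner_def sum_distrib_left mult_ac)

lemma cinner_smult_left: "dim_vec u = dim_vec v \<Longrightarrow> cinner (c \<cdot>\<^sub>v u) v = cnj c * cinner u v"
  by (simp add: cinner_def sum_distrib_left mult_ac)

lemma cinner_uminus_right: "cinner u (- v) = - cinner u v"
  by (simp add: cinner_def sum_negf)

lemma hermitian_cinner:
  assumes M: "hermitian d M" and uv: "u \<in> carrier_vec d" "v \<in> carrier_vec d"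
  shows "cinner u (M *\<^sub>v v) = cinner (M *\<^sub>v u) v"
proof -
  have MC: "M \<in> carrier_mat d d" and Mji: "\<And>i j. i < d \<Longrightarrow> j < d \<Longrightarrow> cnj (M $$ (j,i)) = M $$ (i,j)"
    using hermitian_carrier[OF M] hermitian_cnj[OF M] by blast+
  have "cinner u (M *\<^sub>v v) = (\<Sum>i<d. cnj (u $ i) * (\<Sum>j<d. M $$ (i,j) * v $ j))"
    unfolding cinner_def using MC uv
    by (intro sum.cong) (auto simp: mult_mat_vec_index[OF MC] simp del: index_mult_mat_vec)
  also have "\<dots> = (\<Sum>j<d. (\<Sum>i<d. cnj (u $ i) * M $$ (i,j)) * v $ j)"
    unfolding sum_distrib_left sum_distrib_right mult.assoc by (rule sum.swap)
  also have "\<dots> = (\<Sum>j<d. cnj (\<Sum>i<d. M $$ (j,i) * u $ i) * v $ j)"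
    by (intro sum.cong refl arg_cong2[where f = "(*)"]) (auto simp: Mji mult.commute intro!: sum.cong)
  also have "\<dots> = cinner (M *\<^sub>v u) v"
    unfolding cinner_def using MC uv
    by (intro sum.cong) (auto simp: mult_mat_vec_index[OF MC] simp del: index_mult_mat_vec)
  finally show ?thesis .
qed

definition stabilizer_state :: "nat \<Rightarrow> complex mat set \<Rightarrow> complex vec \<Rightarrow> bool" where
  "stabilizer_state d S \<psi> \<longleftrightarrow> \<psi> \<in> carrier_vec d \<and> cinner \<psi> \<psi> = 1
     \<and> (\<forall>g\<in>S. hermitian d g \<and> g *\<^sub>v \<psi> = \<psi>)
     \<and> (\<forall>v\<in>carrier_vec d. (\<forall>g\<in>S. g *\<^sub>v v = v) \<longrightarrow> (\<exists>c. v = c \<cdot>\<^sub>v \<psi>))"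

lemma stabilizer_state_eigen_or_orthogonal:
  assumes st: "stabilizer_state d S \<psi>"
    and P: "hermitian d P" "P * P = 1\<^sub>m d" "\<forall>g\<in>S. g * P = P * g \<or> g * P = - (P * g)"
  shows "P *\<^sub>v \<psi> = \<psi> \<or> P *\<^sub>v \<psi> = - \<psi> \<or> cinner \<psi> (P *\<^sub>v \<psi>) = 0"
proof -
  have \<psi>: "\<psi> \<in> carrier_vec d" "cinner \<psi> \<psi> = 1"
    and S: "\<And>g. g \<in> S \<Longrightarrow> hermitian d g \<and> g *\<^sub>v \<psi> = \<psi>"
    and span: "\<And>v. v \<in> carrier_vec d \<Longrightarrow> \<forall>g\<in>S. g *\<^sub>v v = v \<Longrightarrow> \<exists>c. v = c \<cdot>\<^sub>v \<psi>"
    using st unfolding stabilizer_state_def by blast+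
  have PC: "P \<in> carrier_mat d d" using hermitian_carrier[OF P(1)] .
  have gC: "g \<in> carrier_mat d d" if "g \<in> S" for g using S[OF that] hermitian_carrier by blast
  show ?thesis
  proof (cases "\<forall>g\<in>S. g * P = P * g")
    case True
    text \<open>Then \<open>P \<psi>\<close> is fixed by \<open>S\<close>, hence a multiple \<open>c \<psi>\<close> with \<open>c\<^sup>2 = 1\<close>.\<close>
    have "\<forall>g\<in>S. g *\<^sub>v (P *\<^sub>v \<psi>) = P *\<^sub>v \<psi>"
      using True S PC gC \<psi>(1) by (metis assoc_mult_mat_vec)
    then obtain c where c: "P *\<^sub>v \<psi> = c \<cdot>\<^sub>v \<psi>"
      using span PC \<psi>(1) by (meson mult_mat_vec_carrier)
    have "\<psi> = (P * P) *\<^sub>v \<psi>" using P(2) \<psi>(1) by simp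
    also have "\<dots> = (c * c) \<cdot>\<^sub>v \<psi>"
      using PC \<psi>(1) c by (simp add: mult_mat_vec smult_smult_assoc)
    finally have "cinner \<psi> \<psi> = cinner \<psi> ((c * c) \<cdot>\<^sub>v \<psi>)" by simp
    then have "c * c = 1" using \<psi>(2) by (simp add: cinner_smult_right)
    then have "c = 1 \<or> c = - 1"
      using square_eq_1_iff by blast
    then show ?thesis using c by (auto simp: smult_vec_def uminus_vec_def)
  next
    case False
    text \<open>An anticommuting stabilizer \<open>g\<close> flips the sign of \<open>\<langle>\<psi>, P \<psi>\<rangle>\<close>.\<close>
    then obtain g where g: "g \<in> S" "g * P = - (P * g)" using P(3) by blast
    have gh: "hermitian d g" "g *\<^sub>v \<psi> = \<psi>" using S[OF g(1)] by blast+
    have "cinner \<psi> (P *\<^sub>v \<psi>) = cinner (g *\<^sub>v \<psi>) (P *\<^sub>v \<psi>)" using gh(2) by simp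
    also have "\<dots> = cinner \<psi> ((g * P) *\<^sub>v \<psi>)"
      using hermitian_cinner[OF gh(1) \<psi>(1), of "P *\<^sub>v \<psi>"] PC gC[OF g(1)] \<psi>(1) by simp
    also have "\<dots> = - cinner \<psi> (P *\<^sub>v (g *\<^sub>v \<psi>))"
      using PC gC[OF g(1)] \<psi>(1) by (simp add: g(2) cinner_uminus_right)
    also have "\<dots> = - cinner \<psi> (P *\<^sub>v \<psi>)" using gh(2) by simp
    finally show ?thesis by simp
  qed
qed

lemma anticommuting_cinner_zero:
  assumes \<psi>: "\<psi> \<in> carrier_vec d" and P: "hermitian d P" "P *\<^sub>v \<psi> = \<psi> \<or> P *\<^sub>v \<psi> = - \<psi>"
    and Q: "Q \<in> carrier_mat d d" "Q * P = - (P * Q)"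
  shows "cinner \<psi> (Q *\<^sub>v \<psi>) = 0"
proof -
  obtain c :: real where c: "P *\<^sub>v \<psi> = of_real c \<cdot>\<^sub>v \<psi>" "c = 1 \<or> c = - 1"
    using P(2)
  proof
    assume "P *\<^sub>v \<psi> = \<psi>"
    then show ?thesis using that[of 1] by simp
  next
    assume "P *\<^sub>v \<psi> = - \<psi>"
    moreover have "- \<psi> = of_real (- 1) \<cdot>\<^sub>v \<psi>" by (rule eq_vecI) auto
    ultimately show ?thesis using that[of "- 1"] by simp
  qed
  have PC: "P \<in> carrier_mat d d" using hermitian_carrier[OF P(1)] .
  have "of_real c * cinner \<psi> (Q *\<^sub>v \<psi>) = cinner \<psi> ((Q * P) *\<^sub>v \<psi>)"
    using PC Q(1) \<psi> c(1) by (simp add: mult_mat_vec cinner_smult_right)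
  also have "\<dots> = - cinner (P *\<^sub>v \<psi>) (Q *\<^sub>v \<psi>)"
    using PC Q \<psi> hermitian_cinner[OF P(1) \<psi>, of "Q *\<^sub>v \<psi>"] by (simp add: cinner_uminus_right)
  also have "\<dots> = - of_real c * cinner \<psi> (Q *\<^sub>v \<psi>)"
    using \<psi> Q(1) c(1) cinner_smult_left[of \<psi> "Q *\<^sub>v \<psi>"] by simp
  finally show ?thesis using c(2) by auto
qed

definition expval :: "complex mat \<Rightarrow> complex mat \<Rightarrow> real" where
  "expval P \<rho> = Re (mtrace (\<rho> * P))"

lemma outer_carrier: "\<psi> \<in> carrier_vec d \<Longrightarrow> outer \<psi> \<in> carrier_mat d d"
  by (simp add: outer_def)

lemma expval_outer:
  assumes "\<psi> \<in> carrier_vec d" "P \<in> carrier_mat d d"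
  shows "expval P (outer \<psi>) = Re (cinner \<psi> (P *\<^sub>v \<psi>))"
proof -
  have "mtrace (outer \<psi> * P) = (\<Sum>i<d. \<Sum>k<d. outer \<psi> $$ (i,k) * P $$ (k,i))"
    by (rule mtrace_mult[OF outer_carrier[OF assms(1)] assms(2)])
  also have "\<dots> = (\<Sum>i<d. \<Sum>k<d. \<psi> $ i * cnj (\<psi> $ k) * P $$ (k,i))"
    using assms(1) by (intro sum.cong refl) (auto simp: outer_def)
  also have "\<dots> = (\<Sum>k<d. cnj (\<psi> $ k) * (\<Sum>i<d. P $$ (k,i) * \<psi> $ i))"
    by (subst sum.swap) (simp add: sum_distrib_left mult_ac)
  also have "\<dots> = cinner \<psi> (P *\<^sub>v \<psi>)"
    using assms by (simp add: cinner_def scalar_prod_def lessThan_atLeast0)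
  finally show ?thesis by (simp add: expval_def)
qed

lemma expval_linear_combination:
  assumes "\<rho> \<in> carrier_mat d d" "P \<in> carrier_mat d d" "F \<subseteq> carrier_mat d d"
    and "\<forall>i<d. \<forall>j<d. \<rho> $$ (i,j) = (\<Sum>\<sigma>\<in>F. of_real (a \<sigma>) * \<sigma> $$ (i,j))"
  shows "expval P \<rho> = (\<Sum>\<sigma>\<in>F. a \<sigma> * expval P \<sigma>)"
proof -
  have "mtrace (\<rho> * P) = (\<Sum>i<d. \<Sum>k<d. \<Sum>\<sigma>\<in>F. of_real (a \<sigma>) * (\<sigma> $$ (i,k) * P $$ (k,i)))"
    using assms by (simp add: mtrace_mult sum_distrib_left mult_ac)
  also have "\<dots> = (\<Sum>i<d. \<Sum>\<sigma>\<in>F. \<Sum>k<d. of_real (a \<sigma>) * (\<sigma> $$ (i,k) * P $$ (k,i)))"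
    by (rule sum.cong[OF refl], rule sum.swap)
  also have "\<dots> = (\<Sum>\<sigma>\<in>F. of_real (a \<sigma>) * mtrace (\<sigma> * P))"
    using assms(2,3) by (subst sum.swap) (auto simp: mtrace_mult sum_distrib_left intro!: sum.cong)
  finally show ?thesis by (simp add: expval_def Re_sum)
qed

lemma expval_add_smult:
  assumes "\<rho> \<in> carrier_mat d d" "P \<in> carrier_mat d d" "Q \<in> carrier_mat d d"
  shows "expval (P + of_real c \<cdot>\<^sub>m Q) \<rho> = expval P \<rho> + c * expval Q \<rho>"
proof -
  have "mtrace (\<rho> * (P + of_real c \<cdot>\<^sub>m Q))
      = (\<Sum>i<d. \<Sum>k<d. \<rho> $$ (i,k) * (P $$ (k,i) + of_real c * Q $$ (k,i)))"
    unfolding mtrace_mult[OF assms(1) add_carrier_mat[OF smult_carrier_mat[OF assms(3)]]]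
    using assms by (intro sum.cong refl) simp
  also have "\<dots> = mtrace (\<rho> * P) + of_real c * mtrace (\<rho> * Q)"
    unfolding mtrace_mult[OF assms(1,2)] mtrace_mult[OF assms(1,3)] distrib_left sum.distrib sum_distrib_left
    by (simp only: mult.left_commute)
  finally show ?thesis by (simp add: expval_def)
qed

section \<open>Two-qubit Pauli operators\<close>

definition pauli_entry :: "nat \<Rightarrow> nat \<Rightarrow> nat \<Rightarrow> complex" where
  "pauli_entry k i j =
     (if k = 0 then of_bool (i = j)
      else if k = 1 then of_bool (i \<noteq> j)
      else if k = 2 then (if i = j then 0 else if i = 0 then - \<i> else \<i>)
      else if i \<noteq> j then 0 else if i = 0 then 1 else - 1)"

lemma pauli_mat: "pauli k = mat 2 2 (\<lambda>(i,j). pauli_entry k i j)"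
  by (rule eq_matI) (auto simp: pauli_def pauli_entry_def mat_of_rows_list_def dest!: less_2_cases)

lemma pauli_entry_cnj: "i < 2 \<Longrightarrow> j < 2 \<Longrightarrow> cnj (pauli_entry a i j) = pauli_entry a j i"
  by (auto simp: pauli_entry_def dest!: less_2_cases)

definition pauli2 :: "nat \<Rightarrow> nat \<Rightarrow> complex mat" where
  "pauli2 a b = kron (pauli a) (pauli b)"

lemma tensor_list_pauli_2: "tensor_list (map pauli [a, b]) = pauli2 a b"
  using kron_one_right by (simp add: pauli2_def)

lemma pauli2_mat:
  "pauli2 a b = mat 4 4 (\<lambda>(i,j). pauli_entry a (i div 2) (j div 2) * pauli_entry b (i mod 2) (j mod 2))"
  unfolding pauli2_def pauli_mat kron_mat_2 by simp

lemma pauli2_carrier [simp]: "pauli2 a b \<in> carrier_mat 4 4"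
  and pauli2_dim [simp]: "dim_row (pauli2 a b) = 4" "dim_col (pauli2 a b) = 4"
  by (simp_all add: pauli2_mat)

lemma pauli2_index:
  "i < 4 \<Longrightarrow> j < 4 \<Longrightarrow> pauli2 a b $$ (i,j) = pauli_entry a (i div 2) (j div 2) * pauli_entry b (i mod 2) (j mod 2)"
  by (simp add: pauli2_mat)

lemma pauli2_mult: "pauli2 a b * pauli2 c d = kron (pauli a * pauli c) (pauli b * pauli d)"
  unfolding pauli2_def pauli_mat by (rule kron_mult_2)

definition pauli_sign :: "nat \<Rightarrow> nat \<Rightarrow> complex" where
  "pauli_sign a c = (if a = 0 \<or> c = 0 \<or> a = c then 1 else - 1)"

lemma pauli_sign_cases: "pauli_sign a c = 1 \<or> pauli_sign a c = - 1"
  by (simp add: pauli_sign_def)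

lemma pauli_sign_commute: "pauli_sign c a = pauli_sign a c"
  by (auto simp: pauli_sign_def)

lemma pauli_mult_commute:
  assumes "a < 4" "c < 4"
  shows "pauli a * pauli c = pauli_sign a c \<cdot>\<^sub>m (pauli c * pauli a)"
  unfolding pauli_mat mat_times_mat using assms
  by (intro eq_matI) (auto simp: sum_lessThan_2 pauli_entry_def pauli_sign_def less_4_cases dest!: less_2_cases)

lemma pauli_mult_self: "a < 4 \<Longrightarrow> pauli a * pauli a = 1\<^sub>m 2"
  unfolding pauli_mat mat_times_mat
  by (intro eq_matI) (auto simp: sum_lessThan_2 pauli_entry_def less_4_cases dest!: less_2_cases)

lemma pauli2_mult_commute:
  assumes "a < 4" "b < 4" "c < 4" "d < 4"
  shows "pauli2 a b * pauli2 c d = (pauli_sign a c * pauli_sign b d) \<cdot>\<^sub>m (pauli2 c d * pauli2 a b)"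
  unfolding pauli2_mult pauli_mult_commute[OF assms(1,3)] pauli_mult_commute[OF assms(2,4)] kron_smult ..

lemma pauli2_mult_self: "a < 4 \<Longrightarrow> b < 4 \<Longrightarrow> pauli2 a b * pauli2 a b = 1\<^sub>m 4"
  unfolding pauli2_mult by (rule eq_matI) (auto simp: pauli_mult_self kron_def less_4_cases)

lemma pauli2_00: "pauli2 0 0 = 1\<^sub>m 4"
  by (rule eq_matI) (auto simp: pauli2_index pauli_entry_def less_4_cases)

lemma hermitian_pauli2: "hermitian 4 (pauli2 a b)"
proof -
  have "i div 2 < 2" "i mod 2 < 2" if "i < 4" for i :: nat
    using that by auto
  then show ?thesis by (auto simp: hermitian_def pauli2_index pauli_entry_cnj)
qed

lemmas pauli2_compute =
  mat_eq_iff vec_eq_iff all_less_4 pauli2_index scalar_prod_def atLeast0LessThan sum_lessThan_4 pauli_entry_def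

lemma pauli_group_2_iff: "g \<in> pauli_group 2 \<longleftrightarrow> (\<exists>k<4. \<exists>a<4. \<exists>b<4. g = \<i> ^ k \<cdot>\<^sub>m pauli2 a b)"
proof
  assume "g \<in> pauli_group 2"
  then obtain k ps where "k < 4" "length ps = 2" "set ps \<subseteq> {0..3}"
      "g = \<i> ^ k \<cdot>\<^sub>m tensor_list (map pauli ps)"
    unfolding pauli_group_def by blast
  moreover from \<open>length ps = 2\<close> obtain a b where "ps = [a, b]"
    by (auto simp: length_Suc_conv numeral_2_eq_2)
  ultimately have "g = \<i> ^ k \<cdot>\<^sub>m pauli2 a b" "a < 4" "b < 4"
    by (auto simp del: tensor_list.simps list.map simp: tensor_list_pauli_2)
  with \<open>k < 4\<close> show "\<exists>k<4. \<exists>a<4. \<exists>b<4. g = \<i> ^ k \<cdot>\<^sub>m pauli2 a b"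
    by blast
next
  assume "\<exists>k<4. \<exists>a<4. \<exists>b<4. g = \<i> ^ k \<cdot>\<^sub>m pauli2 a b"
  then obtain k a b where "k < 4" "a < 4" "b < 4" "g = \<i> ^ k \<cdot>\<^sub>m tensor_list (map pauli [a, b])"
    by (auto simp del: tensor_list.simps list.map simp: tensor_list_pauli_2)
  then show "g \<in> pauli_group 2"
    unfolding pauli_group_def by (intro CollectI exI[of _ k] exI[of _ "[a, b]"]) auto
qed

lemma pauli_group_2_carrier: "g \<in> pauli_group 2 \<Longrightarrow> g \<in> carrier_mat 4 4"
  by (auto simp: pauli_group_2_iff)

lemma pauli_group_2_smult_pauli2: "k < 4 \<Longrightarrow> a < 4 \<Longrightarrow> b < 4 \<Longrightarrow> \<i> ^ k \<cdot>\<^sub>m pauli2 a b \<in> pauli_group 2"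
  unfolding pauli_group_2_iff by blast

lemma pauli_group_2_pauli2: "a < 4 \<Longrightarrow> b < 4 \<Longrightarrow> pauli2 a b \<in> pauli_group 2"
  using pauli_group_2_smult_pauli2[of 0] by (simp add: smult_one_mat)

lemma pauli_group_2_uminus_pauli2: "a < 4 \<Longrightarrow> b < 4 \<Longrightarrow> - pauli2 a b \<in> pauli_group 2"
  using pauli_group_2_smult_pauli2[of 2] by (simp add: smult_minus_one_mat)

lemma pauli_group_2_commute_pauli2:
  assumes "g \<in> pauli_group 2" "c < 4" "d < 4"
  shows "g * pauli2 c d = pauli2 c d * g \<or> g * pauli2 c d = - (pauli2 c d * g)"
proof -
  obtain k a b where g: "a < 4" "b < 4" "g = \<i> ^ k \<cdot>\<^sub>m pauli2 a b"
    using assms(1) by (auto simp: pauli_group_2_iff)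
  have "g * pauli2 c d = \<i> ^ k \<cdot>\<^sub>m (pauli2 a b * pauli2 c d)"
    by (simp add: g(3) mult_smult_assoc_mat[OF pauli2_carrier pauli2_carrier])
  also have "\<dots> = (pauli_sign a c * pauli_sign b d) \<cdot>\<^sub>m (pauli2 c d * g)"
    by (simp add: pauli2_mult_commute[OF g(1,2) assms(2,3)] g(3) smult_smult_mat mult.commute
        mult_smult_distrib[OF pauli2_carrier pauli2_carrier])
  finally show ?thesis
    using pauli_sign_cases[of a c] pauli_sign_cases[of b d] by (auto simp: smult_one_mat smult_minus_one_mat)
qed

lemma pauli_group_2_hermitian:
  assumes "g \<in> pauli_group 2" "g * g \<noteq> - 1\<^sub>m 4"
  shows "hermitian 4 g"
proof -
  obtain k a b where k: "k < 4" and ab: "a < 4" "b < 4" and g: "g = \<i> ^ k \<cdot>\<^sub>m pauli2 a b"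
    using assms(1) by (auto simp: pauli_group_2_iff)
  have "g * g = (\<i> ^ k * \<i> ^ k) \<cdot>\<^sub>m 1\<^sub>m 4"
    using pauli2_mult_self[OF ab]
    by (simp add: g smult_smult_mat mult_smult_assoc_mat[OF pauli2_carrier smult_carrier_mat[OF pauli2_carrier]]
        mult_smult_distrib[OF pauli2_carrier pauli2_carrier])
  with assms(2) have "k \<noteq> 1" "k \<noteq> 3"
    by (auto simp: smult_minus_one_mat power3_eq_cube)
  with k have "cnj (\<i> ^ k) = \<i> ^ k"
    by (auto simp: less_4_cases)
  then show ?thesis unfolding g by (rule hermitian_smult[OF hermitian_pauli2])
qed

section \<open>Pauli expectations in two-qubit stabilizer states\<close>

lemma Stab_carrier: "\<sigma> \<in> Stab n \<Longrightarrow> \<sigma> \<in> carrier_mat (2 ^ n) (2 ^ n)"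
  by (auto simp: Stab_def unit_vec_c_def outer_def)

lemma Stab_2_stabilizer_state:
  assumes "\<sigma> \<in> Stab 2"
  obtains \<psi> S where "\<sigma> = outer \<psi>" "stabilizer_state 4 S \<psi>" "S \<subseteq> pauli_group 2"
proof -
  obtain \<psi> S where \<sigma>: "\<sigma> = outer \<psi>" and S: "S \<subseteq> pauli_group 2" "\<forall>P\<in>S. \<forall>Q\<in>S. P * Q \<in> S"
      "- 1\<^sub>m 4 \<notin> S" "unit_vec_c 4 \<psi>" "\<forall>P\<in>S. P *\<^sub>v \<psi> = \<psi>"
      "\<forall>v\<in>carrier_vec 4. (\<forall>P\<in>S. P *\<^sub>v v = v) \<longrightarrow> (\<exists>c. v = c \<cdot>\<^sub>v \<psi>)"
    using assms unfolding Stab_def by auto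
  have \<psi>: "\<psi> \<in> carrier_vec 4" "(\<Sum>i<4. (cmod (\<psi> $ i))\<^sup>2) = 1"
    using S(4) unfolding unit_vec_c_def by auto
  have "cinner \<psi> \<psi> = (\<Sum>i<4. complex_of_real ((cmod (\<psi> $ i))\<^sup>2))"
    using \<psi>(1) by (simp add: cinner_def complex_norm_square mult.commute del: of_real_power)
  also have "\<dots> = 1"
    by (simp only: of_real_sum[symmetric] \<psi>(2) of_real_1)
  finally have "cinner \<psi> \<psi> = 1" .
  text \<open>Closure under products and \<open>-1 \<notin> S\<close> rule out the non-Hermitian elements \<open>\<plusminus>i P\<close>.\<close>
  moreover have "hermitian 4 g" if "g \<in> S" for g
  proof (rule pauli_group_2_hermitian)
    show "g \<in> pauli_group 2" using S(1) that by blast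
    show "g * g \<noteq> - 1\<^sub>m 4" using S(2,3) that by metis
  qed
  ultimately have "stabilizer_state 4 S \<psi>"
    using \<psi>(1) S(5,6) by (simp add: stabilizer_state_def)
  with \<sigma> S(1) that show ?thesis by blast
qed

lemma Stab_2_pauli2_cases:
  assumes "\<sigma> \<in> Stab 2" "a < 4" "b < 4"
  obtains \<psi> where "\<sigma> = outer \<psi>" "\<psi> \<in> carrier_vec 4" "cinner \<psi> \<psi> = 1"
    "pauli2 a b *\<^sub>v \<psi> = \<psi> \<or> pauli2 a b *\<^sub>v \<psi> = - \<psi> \<or> cinner \<psi> (pauli2 a b *\<^sub>v \<psi>) = 0"
proof -
  obtain \<psi> S where "\<sigma> = outer \<psi>" "stabilizer_state 4 S \<psi>" "S \<subseteq> pauli_group 2"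
    using Stab_2_stabilizer_state[OF assms(1)] .
  moreover have "\<forall>g\<in>S. g * pauli2 a b = pauli2 a b * g \<or> g * pauli2 a b = - (pauli2 a b * g)"
    using \<open>S \<subseteq> pauli_group 2\<close> pauli_group_2_commute_pauli2 assms(2,3) by blast
  ultimately show ?thesis
    using that stabilizer_state_eigen_or_orthogonal[OF _ hermitian_pauli2 pauli2_mult_self[OF assms(2,3)]]
    by (auto simp: stabilizer_state_def)
qed

lemma Stab_2_expval_pauli2:
  assumes "\<sigma> \<in> Stab 2" "a < 4" "b < 4"
  shows "expval (pauli2 a b) \<sigma> \<in> {- 1, 0, 1}"
proof -
  obtain \<psi> where \<psi>: "\<sigma> = outer \<psi>" "\<psi> \<in> carrier_vec 4" "cinner \<psi> \<psi> = 1"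
    "pauli2 a b *\<^sub>v \<psi> = \<psi> \<or> pauli2 a b *\<^sub>v \<psi> = - \<psi> \<or> cinner \<psi> (pauli2 a b *\<^sub>v \<psi>) = 0"
    using Stab_2_pauli2_cases[OF assms] .
  then show ?thesis by (auto simp: expval_outer cinner_uminus_right)
qed

lemma Stab_2_expval_anticommuting:
  assumes "\<sigma> \<in> Stab 2" "a < 4" "b < 4" "c < 4" "d < 4" "pauli_sign a c * pauli_sign b d = - 1"
    and "expval (pauli2 a b) \<sigma> \<noteq> 0"
  shows "expval (pauli2 c d) \<sigma> = 0"
proof -
  obtain \<psi> where \<psi>: "\<sigma> = outer \<psi>" "\<psi> \<in> carrier_vec 4" "cinner \<psi> \<psi> = 1"
    "pauli2 a b *\<^sub>v \<psi> = \<psi> \<or> pauli2 a b *\<^sub>v \<psi> = - \<psi> \<or> cinner \<psi> (pauli2 a b *\<^sub>v \<psi>) = 0"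
    using Stab_2_pauli2_cases[OF assms(1-3)] .
  with assms(7) have eigen: "pauli2 a b *\<^sub>v \<psi> = \<psi> \<or> pauli2 a b *\<^sub>v \<psi> = - \<psi>"
    by (auto simp: expval_outer)
  have "pauli2 c d * pauli2 a b = - (pauli2 a b * pauli2 c d)"
    using pauli2_mult_commute[OF assms(4,5,2,3)] assms(6)
    by (simp add: pauli_sign_commute[of c a] pauli_sign_commute[of d b] smult_minus_one_mat)
  then have "cinner \<psi> (pauli2 c d *\<^sub>v \<psi>) = 0"
    using anticommuting_cinner_zero[OF \<psi>(2) hermitian_pauli2 eigen] by simp
  then show ?thesis using \<psi>(1,2) by (simp add: expval_outer)
qed

lemma Stab_2_expval_pair_bound:
  assumes "\<sigma> \<in> Stab 2" "a < 4" "b < 4" "c < 4" "d < 4" "pauli_sign a c * pauli_sign b d = - 1"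
    and "\<bar>x\<bar> \<le> 1" "\<bar>y\<bar> \<le> 1"
  shows "\<bar>x * expval (pauli2 a b) \<sigma> + y * expval (pauli2 c d) \<sigma>\<bar> \<le> 1"
proof -
  have "\<bar>expval (pauli2 a b) \<sigma>\<bar> \<le> 1" "\<bar>expval (pauli2 c d) \<sigma>\<bar> \<le> 1"
    using Stab_2_expval_pauli2 assms(1-5) by fastforce+
  then have "\<bar>x * expval (pauli2 a b) \<sigma>\<bar> \<le> 1" "\<bar>y * expval (pauli2 c d) \<sigma>\<bar> \<le> 1"
    using assms(7,8) by (simp_all add: abs_mult mult_le_one)
  moreover have "expval (pauli2 a b) \<sigma> = 0 \<or> expval (pauli2 c d) \<sigma> = 0"
    using Stab_2_expval_anticommuting[OF assms(1-6)] by blast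
  ultimately show ?thesis by auto
qed

section \<open>The two-qubit Wigner function as a Fourier transform of Pauli expectations\<close>

definition phase_sign :: "nat \<Rightarrow> bool \<times> bool \<Rightarrow> real" where
  "phase_sign a u = (case u of (q, p) \<Rightarrow>
     if a = 0 then 1 else if a = 1 then (- 1) ^ of_bool p
     else if a = 2 then (- 1) ^ of_bool (q \<noteq> p) else (- 1) ^ of_bool q)"

lemma phase_sign_0 [simp]: "phase_sign 0 u = 1"
  by (simp add: phase_sign_def split: prod.split)

lemma phase_point1_mat:
  "phase_point1 u = mat 2 2 (\<lambda>(i,j). (\<Sum>a<4. of_real (phase_sign a u) * pauli_entry a i j) / 2)"
proof (cases u)
  case (Pair q p)
  then show ?thesis
    by (cases q; cases p; intro eq_matI; auto simp: phase_point1_def pauli_mat sum_lessThan_4 phase_sign_def sgnb_def)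
qed

lemma phase_point_2_mat:
  "phase_point [u, v] =
     mat 4 4 (\<lambda>(i,j). (\<Sum>a<4. \<Sum>b<4. of_real (phase_sign a u * phase_sign b v / 4) * pauli2 a b $$ (i,j)))"
  (is "_ = mat 4 4 ?f")
proof -
  have "phase_point [u, v] = kron (phase_point1 u) (phase_point1 v)"
    using kron_one_right by (simp add: phase_point_def)
  also have "\<dots> = mat 4 4 ?f"
  proof (rule eq_matI)
    fix i j assume "i < dim_row (mat 4 4 ?f)" "j < dim_col (mat 4 4 ?f)"
    then show "kron (phase_point1 u) (phase_point1 v) $$ (i,j) = mat 4 4 ?f $$ (i,j)"
      unfolding phase_point1_mat kron_mat_2 by (simp add: pauli2_index sum_product sum_divide_distrib mult_ac)
  qed (simp_all add: phase_point1_mat kron_mat_2)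
  finally show ?thesis .
qed

lemma wigner_2_expansion:
  assumes "M \<in> carrier_mat 4 4"
  shows "wigner 2 M [u, v] = (\<Sum>a<4. \<Sum>b<4. phase_sign a u * phase_sign b v * expval (pauli2 a b) M) / 16"
proof -
  define c where "c a b = complex_of_real (phase_sign a u * phase_sign b v / 4)" for a b
  have "mtrace (M * phase_point [u, v]) = (\<Sum>i<4. \<Sum>k<4. M $$ (i,k) * (\<Sum>a<4. \<Sum>b<4. c a b * pauli2 a b $$ (k,i)))"
    unfolding phase_point_2_mat c_def by (simp add: mtrace_mult_mat[OF assms])
  also have "\<dots> = (\<Sum>a<4. \<Sum>b<4. c a b * (\<Sum>i<4. \<Sum>k<4. M $$ (i,k) * pauli2 a b $$ (k,i)))"
    by (rule sum_mult_sum_swap)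
  also have "\<dots> = (\<Sum>a<4. \<Sum>b<4. c a b * mtrace (M * pauli2 a b))"
    by (simp add: mtrace_mult[OF assms pauli2_carrier])
  finally show ?thesis
    by (simp add: wigner_def expval_def Re_sum sum_divide_distrib c_def)
qed

definition phase_char :: "nat \<Rightarrow> nat \<Rightarrow> (bool \<times> bool) list \<Rightarrow> real" where
  "phase_char a b \<alpha> = phase_sign a (\<alpha> ! 0) * phase_sign b (\<alpha> ! 1)"

lemma phase_char_2 [simp]: "phase_char a b [u, v] = phase_sign a u * phase_sign b v"
  by (simp add: phase_char_def)

lemma sum_phase_space_2: "(\<Sum>\<alpha>\<in>phase_space 2. h \<alpha>) = (\<Sum>u\<in>UNIV. \<Sum>v\<in>UNIV. h [u, v])"
proof -
  have inj: "inj (\<lambda>(u :: bool \<times> bool, v :: bool \<times> bool). [u, v])"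
    by (auto intro: injI)
  have "phase_space 2 = (\<lambda>(u, v). [u, v]) ` UNIV"
    by (auto simp: phase_space_def length_Suc_conv numeral_2_eq_2 image_iff)
  then have "(\<Sum>\<alpha>\<in>phase_space 2. h \<alpha>) = (\<Sum>(u, v)\<in>UNIV. h [u, v])"
    by (simp add: sum.reindex[OF inj] comp_def prod.case_distrib)
  also have "\<dots> = (\<Sum>u\<in>UNIV. \<Sum>v\<in>UNIV. h [u, v])"
    by (simp add: sum.cartesian_product)
  finally show ?thesis .
qed

lemma phase_space_2_cases:
  assumes "\<alpha> \<in> phase_space 2"
  obtains u v where "\<alpha> = [u, v]"
  using assms by (auto simp: phase_space_def length_Suc_conv numeral_2_eq_2)

lemma phase_sign_orthogonal:
  "a < 4 \<Longrightarrow> c < 4 \<Longrightarrow> (\<Sum>u\<in>UNIV. phase_sign a u * phase_sign c u) = (if a = c then 4 else 0)"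
  by (auto simp: sum_UNIV_bool_pair phase_sign_def less_4_cases)

lemma wigner_2_fourier:
  assumes "M \<in> carrier_mat 4 4" "a < 4" "b < 4"
  shows "(\<Sum>\<alpha>\<in>phase_space 2. phase_char a b \<alpha> * wigner 2 M \<alpha>) = expval (pauli2 a b) M"
proof -
  let ?E = "\<lambda>c d. expval (pauli2 c d) M"
  have "(\<Sum>\<alpha>\<in>phase_space 2. phase_char a b \<alpha> * wigner 2 M \<alpha>)
      = (\<Sum>u\<in>UNIV. \<Sum>v\<in>UNIV. phase_sign a u * phase_sign b v
           * (\<Sum>c<4. \<Sum>d<4. phase_sign c u * phase_sign d v * ?E c d) / 16)"
    by (simp add: sum_phase_space_2 phase_char_def wigner_2_expansion[OF assms(1)])
  also have "\<dots> = (\<Sum>u\<in>UNIV. \<Sum>v\<in>UNIV. phase_sign a u * phase_sign b v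
           * (\<Sum>c<4. \<Sum>d<4. phase_sign c u * phase_sign d v * ?E c d)) / 16"
    by (simp add: sum_divide_distrib)
  also have "\<dots> = (\<Sum>c<4. \<Sum>d<4. (\<Sum>u\<in>UNIV. phase_sign a u * phase_sign c u)
                     * (\<Sum>v\<in>UNIV. phase_sign b v * phase_sign d v) * ?E c d) / 16"
    by (simp only: sum_product_swap)
  also have "\<dots> = ?E a b"
    using assms(2,3) by (auto simp: phase_sign_orthogonal sum_lessThan_4 less_4_cases)
  finally show ?thesis .
qed

section \<open>Duality certificates\<close>

lemma wigner_free_convex2:
  assumes "\<sigma>\<^sub>1 \<in> Stab n" "\<sigma>\<^sub>2 \<in> Stab n" "\<sigma>\<^sub>1 \<noteq> \<sigma>\<^sub>2" "0 \<le> t" "t \<le> 1"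
  shows "(\<lambda>\<alpha>. t * wigner n \<sigma>\<^sub>1 \<alpha> + (1 - t) * wigner n \<sigma>\<^sub>2 \<alpha>) \<in> wigner_free n"
proof -
  let ?c = "\<lambda>\<sigma>. if \<sigma> = \<sigma>\<^sub>1 then t else 1 - t"
  have "sum ?c {\<sigma>\<^sub>1, \<sigma>\<^sub>2} = 1" 
    using assms(3) by (simp add: sum.insert)
  moreover have "(\<lambda>\<alpha>. t * wigner n \<sigma>\<^sub>1 \<alpha> + (1 - t) * wigner n \<sigma>\<^sub>2 \<alpha>) = (\<lambda>\<alpha>. \<Sum>\<sigma>\<in>{\<sigma>\<^sub>1, \<sigma>\<^sub>2}. ?c \<sigma> * wigner n \<sigma> \<alpha>)"
    using assms(3) by (simp add: sum.insert)
  ultimately show ?thesis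
    unfolding wigner_free_def using assms by (intro CollectI exI[of _ "{\<sigma>\<^sub>1, \<sigma>\<^sub>2}"] exI[of _ ?c]) auto
qed

text \<open>Weak LP duality: \<open>g\<close> is a dual feasible point and \<open>f\<close> a primal one of the same value.\<close>

lemma wigner_distance_eqI:
  assumes g: "\<forall>\<alpha>\<in>phase_space n. \<bar>g \<alpha>\<bar> \<le> 1"
    and bound: "\<forall>\<sigma>\<in>Stab n. (\<Sum>\<alpha>\<in>phase_space n. g \<alpha> * wigner n \<sigma> \<alpha>) \<le> m"
    and f: "f \<in> wigner_free n"
    and attained: "l1_dist n (wigner n \<rho>) f = (\<Sum>\<alpha>\<in>phase_space n. g \<alpha> * wigner n \<rho> \<alpha>) - m"
  shows "wigner_distance n \<rho> = l1_dist n (wigner n \<rho>) f"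
proof -
  have lower: "(\<Sum>\<alpha>\<in>phase_space n. g \<alpha> * wigner n \<rho> \<alpha>) - m \<le> l1_dist n (wigner n \<rho>) h"
    if hfree: "h \<in> wigner_free n" for h
  proof -
    obtain F c where F: "finite F" "F \<subseteq> Stab n" "\<forall>\<sigma>\<in>F. 0 \<le> c \<sigma>" "sum c F = 1"
      and h: "h = (\<lambda>\<alpha>. \<Sum>\<sigma>\<in>F. c \<sigma> * wigner n \<sigma> \<alpha>)"
      using hfree unfolding wigner_free_def mem_Collect_eq by (elim exE conjE) blast
    have "(\<Sum>\<alpha>\<in>phase_space n. g \<alpha> * h \<alpha>) = (\<Sum>\<sigma>\<in>F. c \<sigma> * (\<Sum>\<alpha>\<in>phase_space n. g \<alpha> * wigner n \<sigma> \<alpha>))"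
      unfolding h sum_distrib_left by (subst sum.swap) (simp only: mult.left_commute)
    also have "\<dots> \<le> (\<Sum>\<sigma>\<in>F. c \<sigma> * m)"
      using F(2,3) bound by (intro sum_mono mult_left_mono) auto
    also have "\<dots> = m"
      using F(4) by (simp flip: sum_distrib_right)
    finally have hm: "(\<Sum>\<alpha>\<in>phase_space n. g \<alpha> * h \<alpha>) \<le> m" .
    have "(\<Sum>\<alpha>\<in>phase_space n. g \<alpha> * wigner n \<rho> \<alpha>) - (\<Sum>\<alpha>\<in>phase_space n. g \<alpha> * h \<alpha>)
        = (\<Sum>\<alpha>\<in>phase_space n. g \<alpha> * (wigner n \<rho> \<alpha> - h \<alpha>))"
      by (simp only: sum_subtractf right_diff_distrib)
    also have "\<dots> \<le> l1_dist n (wigner n \<rho>) h"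
      unfolding l1_dist_def
    proof (rule sum_mono)
      fix \<alpha> assume "\<alpha> \<in> phase_space n"
      then have "\<bar>g \<alpha> * (wigner n \<rho> \<alpha> - h \<alpha>)\<bar> \<le> \<bar>wigner n \<rho> \<alpha> - h \<alpha>\<bar>"
        using g mult_left_le_one_le[of "\<bar>wigner n \<rho> \<alpha> - h \<alpha>\<bar>" "\<bar>g \<alpha>\<bar>"] by (simp add: abs_mult)
      then show "g \<alpha> * (wigner n \<rho> \<alpha> - h \<alpha>) \<le> \<bar>wigner n \<rho> \<alpha> - h \<alpha>\<bar>" by linarith
    qed
    finally show ?thesis using hm by linarith
  qed
  show ?thesis
    unfolding wigner_distance_def
  proof (rule cInf_eq_minimum)
    show "l1_dist n (wigner n \<rho>) f \<in> {l1_dist n (wigner n \<rho>) h |h. h \<in> wigner_free n}"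
      using f by blast
  next
    fix z assume "z \<in> {l1_dist n (wigner n \<rho>) h |h. h \<in> wigner_free n}"
    then show "l1_dist n (wigner n \<rho>) f \<le> z" using lower attained by auto
  qed
qed

text \<open>Dual certificate for the extent: \<open>|\<langle>P\<rangle>\<^sub>\<rho>| \<le> \<Sum>|a\<^sub>\<sigma>| |\<langle>P\<rangle>\<^sub>\<sigma>|\<close> for every stabilizer decomposition of \<open>\<rho>\<close>.\<close>

lemma stab_extent_eqI:
  assumes "finite F" "F \<subseteq> Stab n" "\<rho> \<in> carrier_mat (2 ^ n) (2 ^ n)"
    and "\<forall>i<2 ^ n. \<forall>j<2 ^ n. \<rho> $$ (i,j) = (\<Sum>\<sigma>\<in>F. of_real (a \<sigma>) * \<sigma> $$ (i,j))"
    and P: "P \<in> carrier_mat (2 ^ n) (2 ^ n)" "\<forall>\<sigma>\<in>Stab n. \<bar>expval P \<sigma>\<bar> \<le> 1"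
    and attained: "\<bar>expval P \<rho>\<bar> = (\<Sum>\<sigma>\<in>F. \<bar>a \<sigma>\<bar>)"
  shows "stab_extent n \<rho> = (\<Sum>\<sigma>\<in>F. \<bar>a \<sigma>\<bar>)"
proof -
  have lower: "\<bar>expval P \<rho>\<bar> \<le> (\<Sum>\<sigma>\<in>G. \<bar>b \<sigma>\<bar>)"
    if "G \<subseteq> Stab n" "\<forall>i<2 ^ n. \<forall>j<2 ^ n. \<rho> $$ (i,j) = (\<Sum>\<sigma>\<in>G. of_real (b \<sigma>) * \<sigma> $$ (i,j))" for G b
  proof -
    have "\<bar>expval P \<rho>\<bar> = \<bar>\<Sum>\<sigma>\<in>G. b \<sigma> * expval P \<sigma>\<bar>"
      using that assms(3) P(1) Stab_carrier by (subst expval_linear_combination) auto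
    also have "\<dots> \<le> (\<Sum>\<sigma>\<in>G. \<bar>b \<sigma> * expval P \<sigma>\<bar>)"
      by (rule sum_abs)
    also have "\<dots> \<le> (\<Sum>\<sigma>\<in>G. \<bar>b \<sigma>\<bar>)"
    proof (rule sum_mono)
      fix \<sigma> assume "\<sigma> \<in> G"
      then have "\<bar>expval P \<sigma>\<bar> \<le> 1"
        using P(2) that(1) by blast
      then show "\<bar>b \<sigma> * expval P \<sigma>\<bar> \<le> \<bar>b \<sigma>\<bar>"
        using mult_right_le_one_le[of "\<bar>b \<sigma>\<bar>" "\<bar>expval P \<sigma>\<bar>"] by (simp add: abs_mult)
    qed
    finally show ?thesis .
  qed
  show ?thesis
    unfolding stab_extent_def
  proof (rule cInf_eq_minimum)
    fix z assume "z \<in> {\<Sum>\<sigma>\<in>G. \<bar>b \<sigma>\<bar> |G b. finite G \<and> G \<subseteq> Stab n \<and> \<rho> \<in> carrier_mat (2 ^ n) (2 ^ n)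
      \<and> (\<forall>i<2 ^ n. \<forall>j<2 ^ n. \<rho> $$ (i,j) = (\<Sum>\<sigma>\<in>G. of_real (b \<sigma>) * \<sigma> $$ (i,j)))}"
    then show "(\<Sum>\<sigma>\<in>F. \<bar>a \<sigma>\<bar>) \<le> z" using lower attained by auto
  qed (use assms(1-4) in blast)
qed

section \<open>Some two-qubit stabilizer states\<close>

definition ket_00_11 :: "complex \<Rightarrow> complex \<Rightarrow> complex vec" where
  "ket_00_11 x y = vec 4 (\<lambda>i. if i = 0 then x else if i = 3 then y else 0)"

lemma ket_00_11_carrier [simp]: "ket_00_11 x y \<in> carrier_vec 4"
  by (simp add: ket_00_11_def)

lemma outer_ket_00_11_index:
  "i < 4 \<Longrightarrow> j < 4 \<Longrightarrow> outer (ket_00_11 x y) $$ (i, j) =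
     (if i = 0 then x else if i = 3 then y else 0) * cnj (if j = 0 then x else if j = 3 then y else 0)"
  by (simp add: outer_def ket_00_11_def)

lemma outer_ket_00_11_neq:
  assumes "x * cnj x \<noteq> x' * cnj x'"
  shows "outer (ket_00_11 x y) \<noteq> outer (ket_00_11 x' y')"
proof
  assume "outer (ket_00_11 x y) = outer (ket_00_11 x' y')"
  then have "outer (ket_00_11 x y) $$ (0, 0) = outer (ket_00_11 x' y') $$ (0, 0)" by simp
  with assms show False by (simp add: outer_def ket_00_11_def)
qed

lemma ket_00_11_span:
  assumes "v \<in> carrier_vec 4" "v $ 1 = 0" "v $ 2 = 0" "v $ 0 * y = v $ 3 * x" "x \<noteq> 0 \<or> y \<noteq> 0"
  shows "\<exists>c. v = c \<cdot>\<^sub>v ket_00_11 x y"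
proof (cases "x = 0")
  case True
  with assms(4,5) have "v $ 0 = 0" by simp
  with True assms(1-3,5) have "v = (v $ 3 / y) \<cdot>\<^sub>v ket_00_11 x y"
    by (auto simp: vec_eq_iff all_less_4 ket_00_11_def)
  then show ?thesis ..
next
  case False
  with assms(4) have "v $ 3 = v $ 0 * y / x" by (simp add: field_simps)
  with False assms(1-3) have "v = (v $ 0 / x) \<cdot>\<^sub>v ket_00_11 x y"
    by (auto simp: vec_eq_iff all_less_4 ket_00_11_def)
  then show ?thesis ..
qed

lemma Stab_2_of_generators:
  assumes pg: "A \<in> pauli_group 2" "B \<in> pauli_group 2" "A * B \<in> pauli_group 2"
    and gens: "A * A = 1\<^sub>m 4" "B * B = 1\<^sub>m 4" "A * B = B * A"
    and distinct: "distinct [1\<^sub>m 4, A, B, A * B, - 1\<^sub>m 4]"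
    and \<psi>: "unit_vec_c 4 \<psi>" "A *\<^sub>v \<psi> = \<psi>" "B *\<^sub>v \<psi> = \<psi>"
    and span: "\<And>v. v \<in> carrier_vec 4 \<Longrightarrow> A *\<^sub>v v = v \<Longrightarrow> B *\<^sub>v v = v \<Longrightarrow> \<exists>c. v = c \<cdot>\<^sub>v \<psi>"
  shows "outer \<psi> \<in> Stab 2"
proof -
  have A: "A \<in> carrier_mat 4 4" and B: "B \<in> carrier_mat 4 4"
    using pg(1,2) by (simp_all add: pauli_group_2_carrier)
  have \<psi>C: "\<psi> \<in> carrier_vec 4" using \<psi>(1) by (simp add: unit_vec_c_def)
  define S where "S = {1\<^sub>m 4, A, B, A * B}"
  have AAB: "A * (A * B) = B" and ABB: "A * B * B = A"
    using gens(1,2) A B by (simp_all add: assoc_mult_mat[symmetric, of A 4 4 A 4 B 4] assoc_mult_mat[of A 4 4 B 4 B 4])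
  have BAB: "B * (A * B) = A" and ABA: "A * B * A = B"
    using AAB ABB gens(3) A B by (metis assoc_mult_mat)+
  have ABAB: "A * B * (A * B) = 1\<^sub>m 4"
    using ABA gens(2) A B by (metis assoc_mult_mat mult_carrier_mat)
  have "card S = 2 ^ 2" "- 1\<^sub>m (2 ^ 2) \<notin> S"
    using distinct by (auto simp: S_def)
  moreover have "\<forall>P\<in>S. \<forall>Q\<in>S. P * Q \<in> S" "\<forall>P\<in>S. \<forall>Q\<in>S. P * Q = Q * P"
    using A B gens AAB ABB BAB ABA ABAB by (auto simp: S_def)
  moreover have "S \<subseteq> pauli_group 2" "1\<^sub>m (2 ^ 2) \<in> S"
    using pg pauli_group_2_pauli2[of 0 0] by (auto simp: S_def pauli2_00)
  moreover have "\<forall>P\<in>S. P *\<^sub>v \<psi> = \<psi>"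
    using \<psi>(2,3) \<psi>C A B by (auto simp: S_def)
  moreover have "\<forall>v\<in>carrier_vec (2 ^ 2). (\<forall>P\<in>S. P *\<^sub>v v = v) \<longrightarrow> (\<exists>c. v = c \<cdot>\<^sub>v \<psi>)"
    using span by (simp add: S_def)
  ultimately show ?thesis
    using \<psi>(1) unfolding Stab_def by (intro CollectI exI[of _ \<psi>] conjI refl exI[of _ S]) auto
qed

text \<open>Every state \<open>x|00\<rangle> + y|11\<rangle>\<close> is fixed by \<open>Z\<otimes>Z\<close>; one further Pauli generator \<open>B\<close> pins it down.\<close>

lemma Stab_2_ket_00_11:
  assumes B: "B \<in> pauli_group 2" "B * B = 1\<^sub>m 4"
    and C: "pauli2 3 3 * B = C" "B * pauli2 3 3 = C" "C \<in> pauli_group 2"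
      "distinct [1\<^sub>m 4, pauli2 3 3, B, C, - 1\<^sub>m 4]"
    and xy: "(cmod x)\<^sup>2 + (cmod y)\<^sup>2 = 1" "B *\<^sub>v ket_00_11 x y = ket_00_11 x y"
    and eigen: "\<And>v. v \<in> carrier_vec 4 \<Longrightarrow> B *\<^sub>v v = v \<Longrightarrow> v $ 0 * y = v $ 3 * x"
  shows "outer (ket_00_11 x y) \<in> Stab 2"
proof (rule Stab_2_of_generators[OF pauli_group_2_pauli2 B(1) _ pauli2_mult_self B(2)])
  show "pauli2 3 3 * B \<in> pauli_group 2" "pauli2 3 3 * B = B * pauli2 3 3"
    "distinct [1\<^sub>m 4, pauli2 3 3, B, pauli2 3 3 * B, - 1\<^sub>m 4]"
    using C by simp_all
  show "unit_vec_c 4 (ket_00_11 x y)"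
    using xy(1) by (simp add: unit_vec_c_def sum_lessThan_4 ket_00_11_def)
  show "pauli2 3 3 *\<^sub>v ket_00_11 x y = ket_00_11 x y"
    by (simp add: pauli2_compute ket_00_11_def)
  fix v :: "complex vec"
  assume v: "v \<in> carrier_vec 4" "pauli2 3 3 *\<^sub>v v = v" "B *\<^sub>v v = v"
  have "(pauli2 3 3 *\<^sub>v v) $ 1 = - v $ 1" "(pauli2 3 3 *\<^sub>v v) $ 2 = - v $ 2"
    using v(1) by (simp_all add: pauli2_compute)
  then have "v $ 1 = 0" "v $ 2 = 0"
    unfolding v(2) by (simp_all add: complex_eq_iff)
  moreover have "x \<noteq> 0 \<or> y \<noteq> 0" using xy(1) by auto
  ultimately show "\<exists>c. v = c \<cdot>\<^sub>v ket_00_11 x y"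
    using ket_00_11_span v(1) eigen[OF v(1,3)] by blast
qed (simp_all add: xy(2))

lemma Stab_2_ket_00: "outer (ket_00_11 1 0) \<in> Stab 2"
proof (rule Stab_2_ket_00_11[of "pauli2 3 0" "pauli2 0 3"])
  fix v :: "complex vec" assume v: "v \<in> carrier_vec 4" "pauli2 3 0 *\<^sub>v v = v"
  have "(pauli2 3 0 *\<^sub>v v) $ 3 = - v $ 3" using v(1) by (simp add: pauli2_compute)
  then show "v $ 0 * 0 = v $ 3 * 1" unfolding v(2) by (simp add: complex_eq_iff)
qed (simp_all add: pauli_group_2_pauli2 pauli2_compute ket_00_11_def)

lemma Stab_2_ket_11: "outer (ket_00_11 0 1) \<in> Stab 2"
proof (rule Stab_2_ket_00_11[of "- pauli2 3 0" "- pauli2 0 3"])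
  fix v :: "complex vec" assume v: "v \<in> carrier_vec 4" "- pauli2 3 0 *\<^sub>v v = v"
  have "(- pauli2 3 0 *\<^sub>v v) $ 0 = - v $ 0" using v(1) by (simp add: pauli2_compute)
  then show "v $ 0 * 1 = v $ 3 * 0" unfolding v(2) by (simp add: complex_eq_iff)
qed (simp_all add: pauli_group_2_uminus_pauli2 pauli2_compute ket_00_11_def)

definition bell_amp :: complex where
  "bell_amp = of_real (1 / sqrt 2)"

lemma cmod_bell_amp: "(cmod bell_amp)\<^sup>2 = 1 / 2"
  by (simp add: bell_amp_def norm_divide power_divide)

lemma bell_amp_sq: "bell_amp * cnj bell_amp = 1 / 2"
  by (simp add: bell_amp_def flip: of_real_mult)

text \<open>Stated in simp normal form (\<open>cnj\<close> pushed through products), so that they fire after simplification.\<close>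
lemma bell_amp_products:
  assumes "w * cnj w = 1"
  shows "bell_amp * (cnj w * cnj bell_amp) = cnj w / 2" "w * bell_amp * cnj bell_amp = w / 2"
    "w * bell_amp * (cnj w * cnj bell_amp) = 1 / 2"
proof -
  have "bell_amp * (cnj w * cnj bell_amp) = cnj w * (bell_amp * cnj bell_amp)"
    by (simp add: mult.left_commute)
  moreover have "w * bell_amp * (cnj w * cnj bell_amp) = (w * cnj w) * (bell_amp * cnj bell_amp)"
    by (simp add: mult_ac)
  ultimately show "bell_amp * (cnj w * cnj bell_amp) = cnj w / 2" "w * bell_amp * cnj bell_amp = w / 2"
    "w * bell_amp * (cnj w * cnj bell_amp) = 1 / 2"
    using assms by (simp_all add: bell_amp_sq mult.assoc)
qed

lemma Stab_2_bell: "outer (ket_00_11 bell_amp bell_amp) \<in> Stab 2"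
proof (rule Stab_2_ket_00_11[of "pauli2 1 1" "- pauli2 2 2"])
  fix v :: "complex vec" assume v: "v \<in> carrier_vec 4" "pauli2 1 1 *\<^sub>v v = v"
  have "(pauli2 1 1 *\<^sub>v v) $ 0 = v $ 3" using v(1) by (simp add: pauli2_compute)
  then show "v $ 0 * bell_amp = v $ 3 * bell_amp" unfolding v(2) by simp
qed (simp_all add: pauli_group_2_pauli2 pauli_group_2_uminus_pauli2 pauli2_compute ket_00_11_def cmod_bell_amp)

lemma Stab_2_bell_i: "outer (ket_00_11 bell_amp (- \<i> * bell_amp)) \<in> Stab 2"
proof (rule Stab_2_ket_00_11[of "- pauli2 1 2" "- pauli2 2 1"])
  fix v :: "complex vec" assume v: "v \<in> carrier_vec 4" "- pauli2 1 2 *\<^sub>v v = v"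
  have "(- pauli2 1 2 *\<^sub>v v) $ 3 = - \<i> * v $ 0" using v(1) by (simp add: pauli2_compute)
  then show "v $ 0 * (- \<i> * bell_amp) = v $ 3 * bell_amp" unfolding v(2) by simp
qed (simp_all add: pauli_group_2_uminus_pauli2 pauli2_compute ket_00_11_def cmod_bell_amp norm_mult)

lemma outer_ket_00_11_distinct:
  "outer (ket_00_11 1 0) \<noteq> outer (ket_00_11 0 1)"
  "outer (ket_00_11 1 0) \<noteq> outer (ket_00_11 bell_amp w)"
  "outer (ket_00_11 0 1) \<noteq> outer (ket_00_11 bell_amp w)"
  by (rule outer_ket_00_11_neq, simp add: bell_amp_sq)+

section \<open>Wigner functions and phase-space witnesses\<close>

lemma expval_pauli2_ket_00_11:
  "expval (pauli2 a b) (outer (ket_00_11 x y)) =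
     Re (x * cnj x * (pauli_entry a 0 0 * pauli_entry b 0 0) + cnj x * y * (pauli_entry a 0 1 * pauli_entry b 0 1)
       + x * cnj y * (pauli_entry a 1 0 * pauli_entry b 1 0) + y * cnj y * (pauli_entry a 1 1 * pauli_entry b 1 1))"
  unfolding expval_outer[OF ket_00_11_carrier pauli2_carrier]
  by (simp add: cinner_def scalar_prod_def atLeast0LessThan sum_lessThan_4 pauli2_index ket_00_11_def algebra_simps)

lemma wigner_2_ket_00_11:
  "wigner 2 (outer (ket_00_11 x y)) [u, v] =
     ((Re (x * cnj x) + Re (y * cnj y)) * (1 + phase_sign 3 u * phase_sign 3 v)
      + (Re (x * cnj x) - Re (y * cnj y)) * (phase_sign 3 u + phase_sign 3 v)
      + 2 * Re (x * cnj y) * (phase_sign 1 u * phase_sign 1 v - phase_sign 2 u * phase_sign 2 v)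
      - 2 * Im (x * cnj y) * (phase_sign 1 u * phase_sign 2 v + phase_sign 2 u * phase_sign 1 v)) / 16"
  by (simp add: wigner_2_expansion[OF outer_carrier[OF ket_00_11_carrier]] sum_lessThan_4
      expval_pauli2_ket_00_11 pauli_entry_def) (simp add: algebra_simps)

lemma wigner_2_product_states:
  "wigner 2 (outer (ket_00_11 1 0)) [u, v] = ((1 + phase_sign 3 u * phase_sign 3 v) + (phase_sign 3 u + phase_sign 3 v)) / 16"
  "wigner 2 (outer (ket_00_11 0 1)) [u, v] = ((1 + phase_sign 3 u * phase_sign 3 v) - (phase_sign 3 u + phase_sign 3 v)) / 16"
  by (simp_all add: wigner_2_ket_00_11)

definition witness_Ry :: "real \<Rightarrow> (bool \<times> bool) list \<Rightarrow> real" where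
  "witness_Ry \<delta> \<alpha> = (phase_char 1 1 \<alpha> + \<delta> * phase_char 3 0 \<alpha> - phase_char 2 2 \<alpha> + \<delta> * phase_char 0 3 \<alpha>) / 2"

definition witness_Rx :: "real \<Rightarrow> (bool \<times> bool) list \<Rightarrow> real" where
  "witness_Rx \<delta> \<alpha> = (- phase_char 1 2 \<alpha> + \<delta> * phase_char 3 0 \<alpha> - phase_char 2 1 \<alpha> + \<delta> * phase_char 0 3 \<alpha>) / 4"

lemma witness_Ry_bounded: "\<delta> = 1 \<or> \<delta> = - 1 \<Longrightarrow> \<alpha> \<in> phase_space 2 \<Longrightarrow> \<bar>witness_Ry \<delta> \<alpha>\<bar> \<le> 1"
  by (elim phase_space_2_cases disjE) (auto simp: witness_Ry_def phase_sign_def split: prod.split)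

lemma witness_Rx_bounded: "\<delta> = 1 \<or> \<delta> = - 1 \<Longrightarrow> \<alpha> \<in> phase_space 2 \<Longrightarrow> \<bar>witness_Rx \<delta> \<alpha>\<bar> \<le> 1"
  by (elim phase_space_2_cases disjE) (auto simp: witness_Rx_def phase_sign_def split: prod.split)

lemma witness_Ry_pairing:
  assumes "M \<in> carrier_mat 4 4"
  shows "(\<Sum>\<alpha>\<in>phase_space 2. witness_Ry \<delta> \<alpha> * wigner 2 M \<alpha>)
    = (expval (pauli2 1 1) M + \<delta> * expval (pauli2 3 0) M - expval (pauli2 2 2) M + \<delta> * expval (pauli2 0 3) M) / 2"
  unfolding witness_Ry_def sum_linear_comb4 by (simp add: wigner_2_fourier[OF assms])

lemma witness_Rx_pairing:
  assumes "M \<in> carrier_mat 4 4"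
  shows "(\<Sum>\<alpha>\<in>phase_space 2. witness_Rx \<delta> \<alpha> * wigner 2 M \<alpha>)
    = (- expval (pauli2 1 2) M + \<delta> * expval (pauli2 3 0) M - expval (pauli2 2 1) M + \<delta> * expval (pauli2 0 3) M) / 4"
  unfolding witness_Rx_def sum_linear_comb4 by (simp add: wigner_2_fourier[OF assms] sum_negf)

lemma witness_Ry_Stab: "\<delta> = 1 \<or> \<delta> = - 1 \<Longrightarrow> \<sigma> \<in> Stab 2 \<Longrightarrow> (\<Sum>\<alpha>\<in>phase_space 2. witness_Ry \<delta> \<alpha> * wigner 2 \<sigma> \<alpha>) \<le> 1"
  using Stab_2_expval_pair_bound[of \<sigma> 1 1 3 0 1 \<delta>] Stab_2_expval_pair_bound[of \<sigma> 2 2 0 3 "- 1" \<delta>]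
  by (auto simp: witness_Ry_pairing[OF Stab_carrier[of \<sigma> 2, simplified]] pauli_sign_def)

lemma witness_Rx_Stab: "\<delta> = 1 \<or> \<delta> = - 1 \<Longrightarrow> \<sigma> \<in> Stab 2 \<Longrightarrow> (\<Sum>\<alpha>\<in>phase_space 2. witness_Rx \<delta> \<alpha> * wigner 2 \<sigma> \<alpha>) \<le> 1 / 2"
  using Stab_2_expval_pair_bound[of \<sigma> 1 2 3 0 "- 1" \<delta>] Stab_2_expval_pair_bound[of \<sigma> 2 1 0 3 "- 1" \<delta>]
  by (auto simp: witness_Rx_pairing[OF Stab_carrier[of \<sigma> 2, simplified]] pauli_sign_def)

lemma sum_abs_phase_char_11_22:
  "(\<Sum>u\<in>UNIV. \<Sum>v\<in>UNIV. \<bar>phase_sign 1 u * phase_sign 1 v - phase_sign 2 u * phase_sign 2 v\<bar>) = 16"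
  by (simp add: sum_UNIV_bool_pair phase_sign_def)

lemma sum_abs_phase_char_Rx:
  "\<delta> = 1 \<or> \<delta> = - 1 \<Longrightarrow>
    (\<Sum>u\<in>UNIV. \<Sum>v\<in>UNIV. \<bar>\<delta> * (phase_sign 3 u + phase_sign 3 v)
       - (phase_sign 1 u * phase_sign 2 v + phase_sign 2 u * phase_sign 1 v)\<bar>) = 16"
  by (elim disjE) (simp_all add: sum_UNIV_bool_pair phase_sign_def)

section \<open>The states \<open>C|00\<rangle> + S|11\<rangle>\<close> and \<open>C|00\<rangle> - i S|11\<rangle>\<close> with real amplitudes\<close>

lemma amplitude_bounds:
  fixes C S :: real
  assumes "C\<^sup>2 + S\<^sup>2 = 1" "0 \<le> C * S"
  shows "0 \<le> 2 * C * S" "2 * C * S \<le> 1" "\<bar>C\<^sup>2 - S\<^sup>2\<bar> \<le> 1" "1 \<le> 2 * C * S + \<bar>C\<^sup>2 - S\<^sup>2\<bar>"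
proof -
  define s c where "s = 2 * C * S" and "c = C\<^sup>2 - S\<^sup>2"
  have "s\<^sup>2 + c\<^sup>2 = (C\<^sup>2 + S\<^sup>2)\<^sup>2"
    by (simp add: s_def c_def power2_eq_square algebra_simps)
  then have sc: "s\<^sup>2 + c\<^sup>2 = 1" using assms(1) by simp
  have s0: "0 \<le> s" using assms(2) by (simp add: s_def)
  have "s\<^sup>2 \<le> 1" "c\<^sup>2 \<le> 1" using sc zero_le_power2[of s] zero_le_power2[of c] by linarith+
  then have "\<bar>s\<bar> \<le> 1" "\<bar>c\<bar> \<le> 1" by (simp_all add: abs_square_le_1)
  then have s1: "s \<le> 1" and c1: "\<bar>c\<bar> \<le> 1" by simp_all
  have "s * s \<le> s" using s1 s0 by (simp add: mult_right_le_one_le)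
  moreover have "\<bar>c\<bar> * \<bar>c\<bar> \<le> \<bar>c\<bar>" using c1 by (intro mult_right_le_one_le) auto
  ultimately have "1 \<le> s + \<bar>c\<bar>" using sc by (simp add: power2_eq_square abs_mult_self_eq)
  with s0 s1 c1 show "0 \<le> 2 * C * S" "2 * C * S \<le> 1" "\<bar>C\<^sup>2 - S\<^sup>2\<bar> \<le> 1" "1 \<le> 2 * C * S + \<bar>C\<^sup>2 - S\<^sup>2\<bar>"
    by (simp_all add: s_def c_def)
qed

lemma abs_eq_sign_times:
  fixes c :: real
  obtains \<delta> where "\<delta> = 1 \<or> \<delta> = - 1" "\<bar>c\<bar> = \<delta> * c" "c = \<delta> * \<bar>c\<bar>"
  by (cases "0 \<le> c") (auto intro: that[of 1] that[of "- 1"])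

lemma wigner_distance_ket_00_11_real:
  fixes C S :: real
  assumes CS: "C\<^sup>2 + S\<^sup>2 = 1" "0 \<le> C * S"
  shows "wigner_distance 2 (outer (ket_00_11 C S)) = 2 * C * S + \<bar>C\<^sup>2 - S\<^sup>2\<bar> - 1"
proof -
  define s c where "s = 2 * C * S" and "c = C\<^sup>2 - S\<^sup>2"
  have bounds: "0 \<le> s" "s \<le> 1" "\<bar>c\<bar> \<le> 1" "1 \<le> s + \<bar>c\<bar>"
    using amplitude_bounds[OF CS] by (simp_all add: s_def c_def)
  obtain \<delta> where \<delta>: "\<delta> = 1 \<or> \<delta> = - 1" "\<bar>c\<bar> = \<delta> * c" "c = \<delta> * \<bar>c\<bar>"
    by (rule abs_eq_sign_times)
  let ?\<rho> = "outer (ket_00_11 C S)" and ?\<Phi> = "outer (ket_00_11 bell_amp bell_amp)"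
  let ?z = "\<lambda>u v. 1 + phase_sign 3 u * phase_sign 3 v" and ?z3 = "\<lambda>u v. phase_sign 3 u + phase_sign 3 v"
    and ?x = "\<lambda>u v. phase_sign 1 u * phase_sign 1 v - phase_sign 2 u * phase_sign 2 v"
  define \<sigma> where "\<sigma> = (if \<delta> = 1 then outer (ket_00_11 1 0) else outer (ket_00_11 0 1))"
  have \<sigma>: "\<sigma> \<in> Stab 2" "\<sigma> \<noteq> ?\<Phi>" "wigner 2 \<sigma> [u, v] = (?z u v + \<delta> * ?z3 u v) / 16" for u v
    using \<delta>(1) Stab_2_ket_00 Stab_2_ket_11 outer_ket_00_11_distinct
    by (auto simp: \<sigma>_def wigner_2_product_states)
  define f where "f = (\<lambda>\<alpha>. \<bar>c\<bar> * wigner 2 \<sigma> \<alpha> + (1 - \<bar>c\<bar>) * wigner 2 ?\<Phi> \<alpha>)"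
  have f: "f \<in> wigner_free 2"
    unfolding f_def using bounds by (intro wigner_free_convex2 \<sigma>(1,2) Stab_2_bell) auto
  have W\<rho>: "wigner 2 ?\<rho> [u, v] = ((C\<^sup>2 + S\<^sup>2) * ?z u v + c * ?z3 u v + s * ?x u v) / 16" for u v
    by (simp add: wigner_2_ket_00_11 s_def c_def) (simp add: algebra_simps power2_eq_square)
  have W\<Phi>: "wigner 2 ?\<Phi> [u, v] = (?z u v + ?x u v) / 16" for u v
    by (simp add: wigner_2_ket_00_11 bell_amp_sq)
  have diff: "wigner 2 ?\<rho> [u, v] - f [u, v] = (s + \<bar>c\<bar> - 1) * ?x u v / 16" for u v
    unfolding f_def W\<rho> W\<Phi> \<sigma>(3) CS(1) using \<delta>(1,2) by (elim disjE) (simp_all add: field_simps)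
  have "l1_dist 2 (wigner 2 ?\<rho>) f = s + \<bar>c\<bar> - 1"
    unfolding l1_dist_def sum_phase_space_2 diff sum_abs_scaled
    using bounds sum_abs_phase_char_11_22 by simp
  moreover have "(\<Sum>\<alpha>\<in>phase_space 2. witness_Ry \<delta> \<alpha> * wigner 2 ?\<rho> \<alpha>) = s + \<bar>c\<bar>"
    using \<delta>(1,2)
    by (simp add: witness_Ry_pairing[OF outer_carrier[OF ket_00_11_carrier]] expval_pauli2_ket_00_11
        pauli_entry_def s_def c_def power2_eq_square)
  ultimately have "wigner_distance 2 ?\<rho> = s + \<bar>c\<bar> - 1"
    using wigner_distance_eqI[of 2 "witness_Ry \<delta>" 1 f ?\<rho>] witness_Ry_bounded[OF \<delta>(1)]
      witness_Ry_Stab[OF \<delta>(1)] f by simp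
  then show ?thesis by (simp add: s_def c_def)
qed

lemma wigner_distance_ket_00_11_imag:
  fixes C S :: real
  assumes CS: "C\<^sup>2 + S\<^sup>2 = 1" "0 \<le> C * S"
  shows "wigner_distance 2 (outer (ket_00_11 C (- \<i> * S))) = (2 * C * S + \<bar>C\<^sup>2 - S\<^sup>2\<bar> - 1) / 2"
proof -
  define s c where "s = 2 * C * S" and "c = C\<^sup>2 - S\<^sup>2"
  have bounds: "0 \<le> s" "s \<le> 1" "\<bar>c\<bar> \<le> 1" "1 \<le> s + \<bar>c\<bar>"
    using amplitude_bounds[OF CS] by (simp_all add: s_def c_def)
  obtain \<delta> where \<delta>: "\<delta> = 1 \<or> \<delta> = - 1" "\<bar>c\<bar> = \<delta> * c" "c = \<delta> * \<bar>c\<bar>"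
    by (rule abs_eq_sign_times)
  let ?\<rho> = "outer (ket_00_11 C (- \<i> * S))" and ?\<Phi> = "outer (ket_00_11 bell_amp (- \<i> * bell_amp))"
  let ?z = "\<lambda>u v. 1 + phase_sign 3 u * phase_sign 3 v" and ?z3 = "\<lambda>u v. phase_sign 3 u + phase_sign 3 v"
    and ?y = "\<lambda>u v. phase_sign 1 u * phase_sign 2 v + phase_sign 2 u * phase_sign 1 v"
  define \<sigma> where "\<sigma> = (if \<delta> = 1 then outer (ket_00_11 1 0) else outer (ket_00_11 0 1))"
  have \<sigma>: "\<sigma> \<in> Stab 2" "\<sigma> \<noteq> ?\<Phi>" "wigner 2 \<sigma> [u, v] = (?z u v + \<delta> * ?z3 u v) / 16" for u v
    using \<delta>(1) Stab_2_ket_00 Stab_2_ket_11 outer_ket_00_11_distinct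
    by (auto simp: \<sigma>_def wigner_2_product_states)
  text \<open>The weight of \<open>\<sigma>\<close> is chosen so that \<open>W\<^sub>\<rho> - f\<close> is proportional to the witness pattern.\<close>
  define t where "t = (1 - s + \<bar>c\<bar>) / 2"
  define f where "f = (\<lambda>\<alpha>. t * wigner 2 \<sigma> \<alpha> + (1 - t) * wigner 2 ?\<Phi> \<alpha>)"
  have f: "f \<in> wigner_free 2"
    unfolding f_def t_def using bounds by (intro wigner_free_convex2 \<sigma>(1,2) Stab_2_bell_i) auto
  have W\<rho>: "wigner 2 ?\<rho> [u, v] = ((C\<^sup>2 + S\<^sup>2) * ?z u v + c * ?z3 u v - s * ?y u v) / 16" for u v
    by (simp add: wigner_2_ket_00_11 s_def c_def) (simp add: algebra_simps power2_eq_square)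
  have W\<Phi>: "wigner 2 ?\<Phi> [u, v] = (?z u v - ?y u v) / 16" for u v
    by (simp add: wigner_2_ket_00_11 bell_amp_def)
  have diff: "wigner 2 ?\<rho> [u, v] - f [u, v] = (s + \<bar>c\<bar> - 1) * (\<delta> * ?z3 u v - ?y u v) / 32" for u v
    unfolding f_def t_def W\<rho> W\<Phi> \<sigma>(3) CS(1) using \<delta>(1,2) by (elim disjE) (simp_all add: field_simps)
  have "l1_dist 2 (wigner 2 ?\<rho>) f = (s + \<bar>c\<bar> - 1) / 2"
    unfolding l1_dist_def sum_phase_space_2 diff sum_abs_scaled
    using bounds sum_abs_phase_char_Rx[OF \<delta>(1)] by simp
  moreover have "(\<Sum>\<alpha>\<in>phase_space 2. witness_Rx \<delta> \<alpha> * wigner 2 ?\<rho> \<alpha>) = (s + \<bar>c\<bar>) / 2"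
    using \<delta>(1,2)
    by (simp add: witness_Rx_pairing[OF outer_carrier[OF ket_00_11_carrier]] expval_pauli2_ket_00_11
        pauli_entry_def s_def c_def power2_eq_square)
  ultimately have "wigner_distance 2 ?\<rho> = (s + \<bar>c\<bar> - 1) / 2"
    using wigner_distance_eqI[of 2 "witness_Rx \<delta>" "1 / 2" f ?\<rho>] witness_Rx_bounded[OF \<delta>(1)]
      witness_Rx_Stab[OF \<delta>(1)] f by (simp add: diff_divide_distrib)
  then show ?thesis by (simp add: s_def c_def)
qed


lemma outer_ket_00_11_decomposition:
  fixes C S :: real
  assumes CS: "C\<^sup>2 + S\<^sup>2 = 1" and w: "w * cnj w = 1" and ij: "i < 4" "j < 4"
  shows "outer (ket_00_11 C (w * S)) $$ (i, j) =
    of_real ((1 - 2 * C * S + (C\<^sup>2 - S\<^sup>2)) / 2) * outer (ket_00_11 1 0) $$ (i, j)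
    + of_real ((1 - 2 * C * S - (C\<^sup>2 - S\<^sup>2)) / 2) * outer (ket_00_11 0 1) $$ (i, j)
    + of_real (2 * C * S) * outer (ket_00_11 bell_amp (w * bell_amp)) $$ (i, j)"
proof -
  have "C * C = (1 + (C\<^sup>2 - S\<^sup>2)) / 2" "S * S = (1 - (C\<^sup>2 - S\<^sup>2)) / 2"
    using CS by (simp_all add: power2_eq_square)
  then have C2: "complex_of_real C * complex_of_real C = of_real ((1 + (C\<^sup>2 - S\<^sup>2)) / 2)"
   and S2: "complex_of_real S * complex_of_real S = of_real ((1 - (C\<^sup>2 - S\<^sup>2)) / 2)"
    by (metis of_real_mult)+
  have "w * of_real S * (cnj w * of_real S) = (w * cnj w) * (of_real S * of_real S)"
    by (simp add: mult_ac)
  then have wS: "w * of_real S * (cnj w * of_real S) = of_real ((1 - (C\<^sup>2 - S\<^sup>2)) / 2)"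
    using w S2 by simp
  show ?thesis
    using ij unfolding less_4_cases
    by (auto simp: outer_ket_00_11_index bell_amp_products[OF w] bell_amp_sq C2 wS) (simp_all add: field_simps)
qed

lemma stab_extent_ket_00_11:
  fixes C S :: real
  assumes CS: "C\<^sup>2 + S\<^sup>2 = 1" "0 \<le> C * S" and w: "w * cnj w = 1"
    and \<Phi>: "outer (ket_00_11 bell_amp (w * bell_amp)) \<in> Stab 2"
    and P: "P \<in> carrier_mat 4 4" "\<forall>\<sigma>\<in>Stab 2. \<bar>expval P \<sigma>\<bar> \<le> 1"
      "\<bar>expval P (outer (ket_00_11 C (w * S)))\<bar> = 2 * C * S + \<bar>C\<^sup>2 - S\<^sup>2\<bar>"
  shows "stab_extent 2 (outer (ket_00_11 C (w * S))) = 2 * C * S + \<bar>C\<^sup>2 - S\<^sup>2\<bar>"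
proof -
  define s c where "s = 2 * C * S" and "c = C\<^sup>2 - S\<^sup>2"
  have bounds: "0 \<le> s" "s \<le> 1" "\<bar>c\<bar> \<le> 1" "1 \<le> s + \<bar>c\<bar>"
    using amplitude_bounds[OF CS] by (simp_all add: s_def c_def)
  let ?\<sigma>\<^sub>0 = "outer (ket_00_11 1 0)" and ?\<sigma>\<^sub>1 = "outer (ket_00_11 0 1)"
    and ?\<Phi> = "outer (ket_00_11 bell_amp (w * bell_amp))"
  define a where "a \<sigma> = (if \<sigma> = ?\<sigma>\<^sub>0 then (1 - s + c) / 2 else if \<sigma> = ?\<sigma>\<^sub>1 then (1 - s - c) / 2 else s)" for \<sigma>
  have distinct: "?\<sigma>\<^sub>0 \<noteq> ?\<sigma>\<^sub>1" "?\<sigma>\<^sub>0 \<noteq> ?\<Phi>" "?\<sigma>\<^sub>1 \<noteq> ?\<Phi>"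
    using outer_ket_00_11_distinct by blast+
  have sum_F: "(\<Sum>\<sigma>\<in>{?\<sigma>\<^sub>0, ?\<sigma>\<^sub>1, ?\<Phi>}. h \<sigma>) = h ?\<sigma>\<^sub>0 + h ?\<sigma>\<^sub>1 + h ?\<Phi>" for h :: "complex mat \<Rightarrow> 'b::comm_monoid_add"
    using distinct by (simp add: add.assoc)
  have a: "a ?\<sigma>\<^sub>0 = (1 - s + c) / 2" "a ?\<sigma>\<^sub>1 = (1 - s - c) / 2" "a ?\<Phi> = s"
    using distinct by (simp_all add: a_def not_sym)
  have abs_sum: "\<bar>(1 - s + c) / 2\<bar> + \<bar>(1 - s - c) / 2\<bar> + \<bar>s\<bar> = s + \<bar>c\<bar>"
    using bounds by (auto simp: abs_if field_simps)
  have "stab_extent 2 (outer (ket_00_11 C (w * S))) = (\<Sum>\<sigma>\<in>{?\<sigma>\<^sub>0, ?\<sigma>\<^sub>1, ?\<Phi>}. \<bar>a \<sigma>\<bar>)"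
  proof (rule stab_extent_eqI[where P = P])
    show "\<forall>i<2 ^ 2. \<forall>j<2 ^ 2. outer (ket_00_11 C (w * S)) $$ (i, j)
        = (\<Sum>\<sigma>\<in>{?\<sigma>\<^sub>0, ?\<sigma>\<^sub>1, ?\<Phi>}. of_real (a \<sigma>) * \<sigma> $$ (i, j))"
      unfolding sum_F a s_def c_def using outer_ket_00_11_decomposition[OF CS(1) w] by simp
    show "\<bar>expval P (outer (ket_00_11 C (w * S)))\<bar> = (\<Sum>\<sigma>\<in>{?\<sigma>\<^sub>0, ?\<sigma>\<^sub>1, ?\<Phi>}. \<bar>a \<sigma>\<bar>)"
      unfolding sum_F a abs_sum using P(3) by (simp add: s_def c_def)
  qed (use Stab_2_ket_00 Stab_2_ket_11 \<Phi> P(1,2) outer_carrier[OF ket_00_11_carrier] in simp_all)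
  then show ?thesis
    unfolding sum_F a abs_sum by (simp add: s_def c_def)
qed

lemma stab_extent_ket_00_11_real:
  fixes C S :: real
  assumes CS: "C\<^sup>2 + S\<^sup>2 = 1" "0 \<le> C * S"
  shows "stab_extent 2 (outer (ket_00_11 C S)) = 2 * C * S + \<bar>C\<^sup>2 - S\<^sup>2\<bar>"
proof -
  obtain \<delta> where \<delta>: "\<delta> = 1 \<or> \<delta> = - 1" "\<bar>C\<^sup>2 - S\<^sup>2\<bar> = \<delta> * (C\<^sup>2 - S\<^sup>2)" "C\<^sup>2 - S\<^sup>2 = \<delta> * \<bar>C\<^sup>2 - S\<^sup>2\<bar>"
    by (rule abs_eq_sign_times)
  let ?P = "pauli2 1 1 + of_real \<delta> \<cdot>\<^sub>m pauli2 3 0"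
  have expval_P: "expval ?P M = expval (pauli2 1 1) M + \<delta> * expval (pauli2 3 0) M" if "M \<in> carrier_mat 4 4" for M
    using expval_add_smult[OF that pauli2_carrier pauli2_carrier] .
  have "\<bar>expval ?P \<sigma>\<bar> \<le> 1" if "\<sigma> \<in> Stab 2" for \<sigma>
    unfolding expval_P[OF Stab_carrier[OF that, simplified]]
    using Stab_2_expval_pair_bound[OF that, of 1 1 3 0 1 \<delta>] \<delta>(1) by (auto simp: pauli_sign_def)
  moreover have "\<bar>expval ?P (outer (ket_00_11 C (1 * S)))\<bar> = 2 * C * S + \<bar>C\<^sup>2 - S\<^sup>2\<bar>"
    unfolding expval_P[OF outer_carrier[OF ket_00_11_carrier]]
    using \<delta>(1,2) CS(2) by (auto simp: expval_pauli2_ket_00_11 pauli_entry_def power2_eq_square)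
  ultimately show ?thesis
    using stab_extent_ket_00_11[OF CS, of 1 ?P] Stab_2_bell by simp
qed

lemma stab_extent_ket_00_11_imag:
  fixes C S :: real
  assumes CS: "C\<^sup>2 + S\<^sup>2 = 1" "0 \<le> C * S"
  shows "stab_extent 2 (outer (ket_00_11 C (- \<i> * S))) = 2 * C * S + \<bar>C\<^sup>2 - S\<^sup>2\<bar>"
proof -
  obtain \<delta> where \<delta>: "\<delta> = 1 \<or> \<delta> = - 1" "\<bar>C\<^sup>2 - S\<^sup>2\<bar> = \<delta> * (C\<^sup>2 - S\<^sup>2)" "C\<^sup>2 - S\<^sup>2 = \<delta> * \<bar>C\<^sup>2 - S\<^sup>2\<bar>"
    by (rule abs_eq_sign_times)
  let ?P = "pauli2 1 2 + of_real (- \<delta>) \<cdot>\<^sub>m pauli2 3 0"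
  have expval_P: "expval ?P M = expval (pauli2 1 2) M - \<delta> * expval (pauli2 3 0) M" if "M \<in> carrier_mat 4 4" for M
    using expval_add_smult[OF that pauli2_carrier pauli2_carrier, of 1 2 "- \<delta>" 3 0] by simp
  have "\<bar>expval ?P \<sigma>\<bar> \<le> 1" if "\<sigma> \<in> Stab 2" for \<sigma>
    unfolding expval_P[OF Stab_carrier[OF that, simplified]]
    using Stab_2_expval_pair_bound[OF that, of 1 2 3 0 1 "- \<delta>"] \<delta>(1) by (auto simp: pauli_sign_def)
  moreover have "\<bar>expval ?P (outer (ket_00_11 C (- \<i> * S)))\<bar> = 2 * C * S + \<bar>C\<^sup>2 - S\<^sup>2\<bar>"
    unfolding expval_P[OF outer_carrier[OF ket_00_11_carrier]]
    using \<delta>(1,2) CS(2) by (auto simp: expval_pauli2_ket_00_11 pauli_entry_def power2_eq_square)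
  ultimately show ?thesis
    using stab_extent_ket_00_11[OF CS, of "- \<i>" ?P] Stab_2_bell_i by simp
qed

lemma tightness_ratios:
  fixes x :: real
  shows "0 < x - 1 \<longrightarrow> (x - 1) / (x - 1) = 1" "0 < (x - 1) / 2 \<longrightarrow> (x - 1) / ((x - 1) / 2) = 2"
  by (simp, auto simp: field_simps)

theorem theorem5p1:
  fixes \<theta> :: real
  assumes "0 < \<theta>" and "\<theta> < pi"
  shows "wigner_distance 2 (rho_Ry \<theta>) = \<bar>sin \<theta>\<bar> + \<bar>cos \<theta>\<bar> - 1
    \<and> wigner_distance 2 (rho_Rx \<theta>) = (\<bar>sin \<theta>\<bar> + \<bar>cos \<theta>\<bar> - 1) / 2
    \<and> stab_extent 2 (rho_Ry \<theta>) = \<bar>sin \<theta>\<bar> + \<bar>cos \<theta>\<bar>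
    \<and> stab_extent 2 (rho_Rx \<theta>) = \<bar>sin \<theta>\<bar> + \<bar>cos \<theta>\<bar>
    \<and> (wigner_distance 2 (rho_Ry \<theta>) > 0 \<longrightarrow> tightness 2 (rho_Ry \<theta>) = 1)
    \<and> (wigner_distance 2 (rho_Rx \<theta>) > 0 \<longrightarrow> tightness 2 (rho_Rx \<theta>) = 2)"
proof -
  define C S where "C = cos (\<theta> / 2)" and "S = sin (\<theta> / 2)"
  have CS: "C\<^sup>2 + S\<^sup>2 = 1" by (simp add: C_def S_def)
  have s: "2 * C * S = \<bar>sin \<theta>\<bar>"
    using sin_double[of "\<theta> / 2"] sin_gt_zero[OF assms] by (simp add: C_def S_def mult_ac)
  have c: "C\<^sup>2 - S\<^sup>2 = cos \<theta>"
    using cos_double[of "\<theta> / 2"] by (simp add: C_def S_def)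
  have CS0: "0 \<le> C * S" using s by simp
  have Ry: "rho_Ry \<theta> = outer (ket_00_11 C S)"
    unfolding rho_Ry_def psi_Ry_def ket_00_11_def C_def S_def ..
  have Rx: "rho_Rx \<theta> = outer (ket_00_11 C (- \<i> * S))"
    unfolding rho_Rx_def psi_Rx_def ket_00_11_def C_def S_def ..
  have C_Ry: "wigner_distance 2 (rho_Ry \<theta>) = \<bar>sin \<theta>\<bar> + \<bar>cos \<theta>\<bar> - 1"
    using wigner_distance_ket_00_11_real[OF CS CS0] unfolding Ry s c .
  have C_Rx: "wigner_distance 2 (rho_Rx \<theta>) = (\<bar>sin \<theta>\<bar> + \<bar>cos \<theta>\<bar> - 1) / 2"
    using wigner_distance_ket_00_11_imag[OF CS CS0] unfolding Rx s c .
  have \<Gamma>_Ry: "stab_extent 2 (rho_Ry \<theta>) = \<bar>sin \<theta>\<bar> + \<bar>cos \<theta>\<bar>"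
    using stab_extent_ket_00_11_real[OF CS CS0] unfolding Ry s c .
  have \<Gamma>_Rx: "stab_extent 2 (rho_Rx \<theta>) = \<bar>sin \<theta>\<bar> + \<bar>cos \<theta>\<bar>"
    using stab_extent_ket_00_11_imag[OF CS CS0] unfolding Rx s c .
  have "wigner_distance 2 (rho_Ry \<theta>) > 0 \<longrightarrow> tightness 2 (rho_Ry \<theta>) = 1"
    unfolding tightness_def C_Ry \<Gamma>_Ry by (rule tightness_ratios(1))
  moreover have "wigner_distance 2 (rho_Rx \<theta>) > 0 \<longrightarrow> tightness 2 (rho_Rx \<theta>) = 2"
    unfolding tightness_def C_Rx \<Gamma>_Rx by (rule tightness_ratios(2))
  ultimately show ?thesis
    using C_Ry C_Rx \<Gamma>_Ry \<Gamma>_Rx by (intro conjI)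
qed

end
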